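(* Let $\{X_k, k\in\mathbb{N}_+\}$ be a sequence of centered, integer-valued i.i.d. random variables in the domain of attraction of an $\alpha$-stable law with $\alpha\in(0,1)$, i.e. for each $x\in\mathbb{R}$, $\mathbb{P}(n^{-1/\alpha}S_n\le x)\to F_\alpha(x)$ as $n\to\infty$, where $S_n=X_1+\cdots+X_n$ and $F_\alpha$ is the distribution function of a stable law with characteristic function $\varphi(\theta)=\exp(-|\theta|^\alpha(C_1+iC_2\,\mathrm{sgn}\,\theta))$. Let $\{\xi(k),k\in\mathbb{Z}\}$ be a stationary sequence of real random variables, independent of $\{X_k\}$, and let $(u_n)$ be a sequence of reals such that $n\,\mathbb{P}(\xi(0)>u_n)\to\tau$ as $n\to\infty$ for some $\tau\ge 0$. Assume that $\{\xi(k)\}$ satisfies the conditions $D(u_n)$ and $D'(u_n)$ (defined in the context). Then for almost every realization of $\{S_n,n\in\mathbb{N}_+\}$, $$\mathbb{P}\Big(\max_{k\le n}\xi(S_k)\le u_n\Big)\xrightarrow[n\to\infty]{} e^{-\tau q},$$ where $q=\mathbb{P}(\forall k\in\mathbb{N}_+,\ S_k\neq 0)$ and the probability on the left is with respect to the scenery $\{\xi(k)\}$ with the realization of the walk held fixed.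
   Context: For integers $i_1<\cdots<i_p$ and $u\in\mathbb{R}$, write $F_{i_1,\ldots,i_p}(u)=\mathbb{P}(\xi(i_1)\le u,\ldots,\xi(i_p)\le u)$. Condition $D(u_n)$: there exist a family $(\alpha_{n,l})_{(n,l)\in\mathbb{N}^2}$ and a sequence $(l_n)$ of positive integers with $\alpha_{n,l_n}\to0$, $l_n=o(n)$, such that $|F_{i_1,\ldots,i_p,j_1,\ldots,j_{p'}}(u_n)-F_{i_1,\ldots,i_p}(u_n)F_{j_1,\ldots,j_{p'}}(u_n)|\le\alpha_{n,l}$ for all integers $i_1<\cdots<i_p<j_1<\cdots<j_{p'}$ with $j_1-i_p\ge l$, uniformly in $p,p'$. Condition $D'(u_n)$: there exists a sequence of integers $(k_n)$ with $k_n\to\infty$, $\frac{n^2}{k_n}\alpha_{n,l_n}\to0$ and $k_nl_n=o(n)$ (with $(\alpha_{n,l})$, $(l_n)$ from $D(u_n)$), such that $\lim_{n\to\infty} n\sum_{j=1}^{\lfloor n/k_n\rfloor}\mathbb{P}(\xi(0)>u_n,\xi(j)>u_n)=0$. *)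

theory Defs
  imports "HOL-Probability.Probability"
begin

text \<open>Joint non-exceedance probability F_I(u) = P(xi(i) <= u for all i in I),
  for a finite set I of integer indices (the increasing tuple i_1 < ... < i_p).\<close>
definition jointF :: "'b measure \<Rightarrow> (int \<Rightarrow> 'b \<Rightarrow> real) \<Rightarrow> int set \<Rightarrow> real \<Rightarrow> real" where
  "jointF N \<xi> I u = measure N {\<eta> \<in> space N. \<forall>i\<in>I. \<xi> i \<eta> \<le> u}"

definition stationary_seq :: "'b measure \<Rightarrow> (int \<Rightarrow> 'b \<Rightarrow> real) \<Rightarrow> bool" where
  "stationary_seq N \<xi> \<longleftrightarrow>
     (\<forall>h::int. distr N (Pi\<^sub>M UNIV (\<lambda>_. borel)) (\<lambda>\<eta> k. \<xi> (k + h) \<eta>)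
             = distr N (Pi\<^sub>M UNIV (\<lambda>_. borel)) (\<lambda>\<eta> k. \<xi> k \<eta>))"

definition condD ::
  "'b measure \<Rightarrow> (int \<Rightarrow> 'b \<Rightarrow> real) \<Rightarrow> (nat \<Rightarrow> real) \<Rightarrow> (nat \<Rightarrow> nat \<Rightarrow> real) \<Rightarrow> (nat \<Rightarrow> nat) \<Rightarrow> bool" where
  "condD N \<xi> u a l \<longleftrightarrow>
     (\<forall>n. l n > 0) \<and>
     (\<lambda>n. a n (l n)) \<longlonglongrightarrow> 0 \<and>
     (\<lambda>n. real (l n) / real n) \<longlonglongrightarrow> 0 \<and>
     (\<forall>n m I J. finite I \<and> finite J \<and> I \<noteq> {} \<and> J \<noteq> {} \<and>
        (\<forall>i\<in>I. \<forall>j\<in>J. i + int m \<le> j) \<longrightarrow>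
        \<bar>jointF N \<xi> (I \<union> J) (u n) - jointF N \<xi> I (u n) * jointF N \<xi> J (u n)\<bar> \<le> a n m)"

definition condD' ::
  "'b measure \<Rightarrow> (int \<Rightarrow> 'b \<Rightarrow> real) \<Rightarrow> (nat \<Rightarrow> real) \<Rightarrow> (nat \<Rightarrow> nat \<Rightarrow> real) \<Rightarrow> (nat \<Rightarrow> nat) \<Rightarrow> bool" where
  "condD' N \<xi> u a l \<longleftrightarrow>
     (\<exists>k :: nat \<Rightarrow> nat.
        filterlim k at_top sequentially \<and>
        (\<lambda>n. real n ^ 2 / real (k n) * a n (l n)) \<longlonglongrightarrow> 0 \<and>
        (\<lambda>n. real (k n * l n) / real n) \<longlonglongrightarrow> 0 \<and>
        (\<lambda>n. real n * (\<Sum>j=1..n div k n.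
             measure N {\<eta> \<in> space N. \<xi> 0 \<eta> > u n \<and> \<xi> (int j) \<eta> > u n})) \<longlonglongrightarrow> 0)"

end

theory Submission
  imports Defs
begin

text \<open>
  For a fixed path of the walk, the event \<open>max {\<xi> (S k) | k \<in> {1..n}} \<le> u n\<close> only involves
  the scenery on the range \<open>R n = {S 1, \<dots>, S n}\<close>, so its probability is \<open>F (R n) (u n)\<close>.
  The increments are i.i.d., so their shift is ergodic (Kolmogorov's 0-1 law), and the ergodic
  theorem applied to the events "no return to the current site (within \<open>m\<close> steps)" gives
  \<open>card (R n) / n \<longlonglongrightarrow> q\<close> almost surely (Kesten-Spitzer-Whitman).
  It remains to show \<open>F (V n) (u n) \<longlonglongrightarrow> exp (- \<tau> * r)\<close> for arbitrary finite sets of sites with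
  \<open>card (V n) \<le> n\<close> and \<open>card (V n) / n \<longlonglongrightarrow> r\<close>. This is Leadbetter's block argument: cut \<open>V n\<close>
  into \<open>k n\<close> runs of consecutive points, discard gaps of length \<open>l n\<close> between them, factorise
  over the runs by \<open>D(u n)\<close> and apply Bonferroni's inequalities within each run, where
  \<open>D'(u n)\<close> makes double exceedances negligible.
\<close>

lemma (in prob_space) bonferroni_lower:
  fixes A :: "'i::linorder \<Rightarrow> 'a set"
  assumes "finite I" and "\<And>i. i \<in> I \<Longrightarrow> A i \<in> events"
  shows "(\<Sum>i\<in>I. prob (A i)) - (\<Sum>(i, j)\<in>{(i, j)\<in>I \<times> I. i < j}. prob (A i \<inter> A j))
           \<le> prob (\<Union>i\<in>I. A i)"
  using assms
proof (induction I rule: finite_linorder_max_induct)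
  case empty
  then show ?case by simp
next
  case (insert b I)
  have b_notin: "b \<notin> I" using insert.hyps(2) by auto
  have pairs: "{(i, j)\<in>insert b I \<times> insert b I. i < j} = {(i, j)\<in>I \<times> I. i < j} \<union> (\<lambda>i. (i, b)) ` I"
    using insert.hyps(2) by auto
  have sum_pairs: "(\<Sum>(i, j)\<in>{(i, j)\<in>insert b I \<times> insert b I. i < j}. prob (A i \<inter> A j))
      = (\<Sum>(i, j)\<in>{(i, j)\<in>I \<times> I. i < j}. prob (A i \<inter> A j)) + (\<Sum>i\<in>I. prob (A i \<inter> A b))"
  proof -
    have fin_pairs: "finite {(i, j)\<in>I \<times> I. i < j}"
      by (rule finite_subset[of _ "I \<times> I"]) (use insert.hyps(1) in auto)
    have disjoint: "{(i, j)\<in>I \<times> I. i < j} \<inter> (\<lambda>i. (i, b)) ` I = {}"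
      using b_notin by auto
    have "(\<Sum>(i, j)\<in>(\<lambda>i. (i, b)) ` I. prob (A i \<inter> A j)) = (\<Sum>i\<in>I. prob (A i \<inter> A b))"
      by (subst sum.reindex) (auto simp: inj_on_def)
    then show ?thesis
      unfolding pairs sum.union_disjoint[OF fin_pairs finite_imageI[OF insert.hyps(1)] disjoint]
      by simp
  qed
  have "A b \<inter> (\<Union>i\<in>I. A i) = (\<Union>i\<in>I. A i \<inter> A b)" by blast
  then have "prob (A b \<inter> (\<Union>i\<in>I. A i)) = prob (\<Union>i\<in>I. A i \<inter> A b)" by simp
  also have "\<dots> \<le> (\<Sum>i\<in>I. prob (A i \<inter> A b))"
    by (rule finite_measure_subadditive_finite) (use insert in auto)
  finally have overlap: "prob (A b \<inter> (\<Union>i\<in>I. A i)) \<le> (\<Sum>i\<in>I. prob (A i \<inter> A b))" .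
  have "prob (\<Union>i\<in>insert b I. A i) = prob (A b) + prob (\<Union>i\<in>I. A i) - prob (A b \<inter> (\<Union>i\<in>I. A i))"
    using insert by (simp add: measure_Un3 fmeasurable_eq_sets sets.finite_UN)
  then show ?case
    using insert overlap b_notin unfolding sum_pairs by (simp add: sum.insert)
qed

lemma prod_diff_le_sum_diff:
  fixes x y :: "'i \<Rightarrow> real"
  assumes "finite A" and "\<And>i. i \<in> A \<Longrightarrow> 0 \<le> y i \<and> y i \<le> x i \<and> x i \<le> 1"
  shows "(\<Prod>i\<in>A. x i) - (\<Prod>i\<in>A. y i) \<le> (\<Sum>i\<in>A. x i - y i)"
  using assms
proof (induction A rule: finite_induct)
  case empty
  then show ?case by simp
next
  case (insert a A)
  have IH: "(\<Prod>i\<in>A. x i) - (\<Prod>i\<in>A. y i) \<le> (\<Sum>i\<in>A. x i - y i)" using insert by blast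
  have y_le_1: "0 \<le> y i \<and> y i \<le> 1" if "i \<in> A" for i
    using insert.prems that by (meson insertCI order_trans)
  have y_prod: "0 \<le> (\<Prod>i\<in>A. y i)" "(\<Prod>i\<in>A. y i) \<le> 1" "(\<Prod>i\<in>A. y i) \<le> (\<Prod>i\<in>A. x i)"
    using insert.prems y_le_1 by (auto intro!: prod_nonneg prod_le_1 prod_mono)
  have xa: "0 \<le> y a" "y a \<le> x a" "x a \<le> 1" using insert by auto
  have "x a * (\<Prod>i\<in>A. x i) - y a * (\<Prod>i\<in>A. y i)
      = x a * ((\<Prod>i\<in>A. x i) - (\<Prod>i\<in>A. y i)) + (x a - y a) * (\<Prod>i\<in>A. y i)"
    by (simp add: algebra_simps)
  also have "\<dots> \<le> ((\<Prod>i\<in>A. x i) - (\<Prod>i\<in>A. y i)) + (x a - y a)"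
    using xa y_prod by (intro add_mono mult_left_le_one_le mult_left_le) auto
  finally show ?case using insert.hyps IH by simp
qed

lemma prod_one_minus_le_exp:
  fixes s :: "'i \<Rightarrow> real"
  assumes "finite A" and "\<And>i. i \<in> A \<Longrightarrow> s i \<le> 1"
  shows "(\<Prod>i\<in>A. 1 - s i) \<le> exp (- (\<Sum>i\<in>A. s i))"
proof -
  have "(\<Prod>i\<in>A. 1 - s i) \<le> (\<Prod>i\<in>A. exp (- s i))"
    by (rule prod_mono) (use assms(2) exp_ge_add_one_self[of "- s _"] in auto)
  also have "\<dots> = exp (- (\<Sum>i\<in>A. s i))"
    using assms(1) by (subst sum_negf[symmetric]) (simp add: exp_sum)
  finally show ?thesis .
qed

lemma exp_le_prod_one_minus:
  fixes s :: "'i \<Rightarrow> real"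
  assumes "finite A" and "\<And>i. i \<in> A \<Longrightarrow> 0 \<le> s i \<and> s i \<le> 1/2"
  shows "exp (- (\<Sum>i\<in>A. s i) - 2 * (\<Sum>i\<in>A. (s i)\<^sup>2)) \<le> (\<Prod>i\<in>A. 1 - s i)"
proof -
  have factor: "exp (- s i - 2 * (s i)\<^sup>2) \<le> 1 - s i" if "i \<in> A" for i
  proof -
    have "- s i - 2 * (s i)\<^sup>2 \<le> ln (1 - s i)"
      using ln_one_minus_pos_lower_bound[of "s i"] assms(2)[OF that] by simp
    then have "exp (- s i - 2 * (s i)\<^sup>2) \<le> exp (ln (1 - s i))"
      using exp_le_cancel_iff by blast
    also have "\<dots> = 1 - s i" using assms(2)[OF that] by simp
    finally show ?thesis .
  qed
  have "exp (- (\<Sum>i\<in>A. s i) - 2 * (\<Sum>i\<in>A. (s i)\<^sup>2)) = (\<Prod>i\<in>A. exp (- s i - 2 * (s i)\<^sup>2))"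
    using assms(1) by (simp add: exp_sum [symmetric] sum_subtractf sum_negf sum_distrib_left)
  also have "\<dots> \<le> (\<Prod>i\<in>A. 1 - s i)"
    using factor by (intro prod_mono) auto
  finally show ?thesis .
qed

section \<open>Cutting a finite set of sites into separated blocks\<close>

text \<open>Labels the points of \<open>V\<close>, in increasing order, with \<open>0, \<dots>, K - 1\<close> in runs of nearly equal size.\<close>
definition rank_block :: "int set \<Rightarrow> nat \<Rightarrow> int \<Rightarrow> nat" where
  "rank_block V K v = card {x\<in>V. x < v} * K div card V"

lemma card_less_in_strict_mono:
  fixes V :: "int set"
  assumes "finite V" "v \<in> V" "v < w"
  shows "card {x\<in>V. x < v} < card {x\<in>V. x < w}"
  by (rule psubset_card_mono) (use assms in auto)

lemma card_less_in_less_card: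
  fixes V :: "int set"
  assumes "finite V" "v \<in> V"
  shows "card {x\<in>V. x < v} < card V"
  by (rule psubset_card_mono) (use assms in auto)

lemma rank_block_mono:
  assumes "finite V" "v \<in> V" "v \<le> w"
  shows "rank_block V K v \<le> rank_block V K w"
proof -
  have "card {x\<in>V. x < v} \<le> card {x\<in>V. x < w}"
    using card_less_in_strict_mono[OF assms(1,2), of w] assms(3) by (cases "v = w") auto
  then show ?thesis unfolding rank_block_def by (simp add: div_le_mono)
qed

lemma rank_block_less:
  assumes "finite V" "v \<in> V" "0 < K"
  shows "rank_block V K v < K"
proof -
  have "card {x\<in>V. x < v} * K < card V * K"
    using card_less_in_less_card[OF assms(1,2)] assms(3) by simp
  then show ?thesis unfolding rank_block_def by (simp add: div_less_iff_less_mult mult.commute)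
qed

lemma card_mult_div_eq_le:
  fixes R K i :: nat
  assumes K: "0 < K"
  shows "real (card {r. r < R \<and> r * K div R = i}) \<le> real R / real K + 1"
proof (cases "{r. r < R \<and> r * K div R = i} = {}")
  case True
  show ?thesis unfolding True by simp
next
  case False
  define T where "T = {r. r < R \<and> r * K div R = i}"
  have fin_T: "finite T" unfolding T_def by simp
  define m where "m = Min T"
  have m_in: "m \<in> T" using False fin_T unfolding m_def T_def by (intro Min_in) auto
  have R_pos: "0 < R" using m_in unfolding T_def by auto
  have lower: "i * R \<le> r * K" and upper: "r * K < i * R + R" if "r \<in> T" for r
  proof -
    have i: "i = r * K div R" using that unfolding T_def by auto
    show "i * R \<le> r * K" unfolding i by (metis div_times_less_eq_dividend mult.commute)
    show "r * K < i * R + R" unfolding i using R_pos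
      by (metis add.commute dividend_less_div_times mult.commute mult_Suc plus_1_eq_Suc)
  qed
  have "T \<subseteq> {m..m + (R - 1) div K}"
  proof
    fix r assume r: "r \<in> T"
    have "m \<le> r" using r fin_T unfolding m_def by simp
    moreover have "r * K < m * K + R" using upper[OF r] lower[OF m_in] by linarith
    then have "(r - m) * K < R" using R_pos unfolding diff_mult_distrib by arith
    then have "r - m \<le> (R - 1) div K" using K by (simp add: less_eq_div_iff_mult_less_eq)
    ultimately show "r \<in> {m..m + (R - 1) div K}" by auto
  qed
  then have "card T \<le> (R - 1) div K + 1"
    using card_mono[of "{m..m + (R - 1) div K}" T] by simp
  moreover have "real ((R - 1) div K) \<le> real R / real K"
  proof -
    have "(R - 1) div K * K \<le> R" by (metis div_times_less_eq_dividend le_trans diff_le_self)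
    then show ?thesis using K by (simp add: pos_le_divide_eq flip: of_nat_mult)
  qed
  ultimately show ?thesis unfolding T_def[symmetric] by linarith
qed

lemma card_rank_block_eq_le:
  assumes fin: "finite V" and K: "0 < K"
  shows "real (card {v\<in>V. rank_block V K v = i}) \<le> real (card V) / real K + 1"
proof -
  let ?rk = "\<lambda>v. card {x\<in>V. x < v}"
  have "inj_on ?rk V"
  proof (rule inj_onI)
    fix x y assume "x \<in> V" "y \<in> V" "?rk x = ?rk y"
    then show "x = y"
      using card_less_in_strict_mono[OF fin, of x y] card_less_in_strict_mono[OF fin, of y x]
      by (metis less_irrefl linorder_neqE)
  qed
  then have "card {v\<in>V. rank_block V K v = i} = card (?rk ` {v\<in>V. rank_block V K v = i})"
    by (rule card_image[symmetric, OF inj_on_subset]) auto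
  also have "\<dots> \<le> card {r. r < card V \<and> r * K div card V = i}"
  proof (rule card_mono)
    show "?rk ` {v\<in>V. rank_block V K v = i} \<subseteq> {r. r < card V \<and> r * K div card V = i}"
      using card_less_in_less_card[OF fin] unfolding rank_block_def by auto
  qed simp
  finally show ?thesis
    using card_mult_div_eq_le[OF K, of "card V" i] by linarith
qed

text \<open>
  The block \<open>G i\<close> keeps those points of label \<open>i\<close> that are at distance at least \<open>l\<close> from all
  points of larger label; at most \<open>l\<close> points are dropped at the end of each label class.
\<close>
lemma exists_separated_blocks:
  fixes V :: "int set" and K l :: nat
  assumes fin: "finite V" and K: "0 < K"
  obtains G :: "nat \<Rightarrow> int set" and c :: "int \<Rightarrow> nat"
  where "\<And>i. G i \<subseteq> {v\<in>V. c v = i}"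
    and "\<And>i j v w. i < j \<Longrightarrow> v \<in> G i \<Longrightarrow> w \<in> G j \<Longrightarrow> v + int l \<le> w"
    and "card (V - (\<Union>i<K. G i)) \<le> K * l"
    and "\<And>i. real (card {v\<in>V. c v = i}) \<le> real (card V) / real K + 1"
proof -
  define c where "c = rank_block V K"
  define G where "G i = {v\<in>V. c v = i \<and> (\<forall>w\<in>V. i < c w \<longrightarrow> v + int l \<le> w)}" for i
  define next_start where "next_start i = Min {w\<in>V. i < c w}" for i
  have "V - (\<Union>i<K. G i) \<subseteq> (\<Union>i<K. {next_start i - int l ..< next_start i})"
  proof
    fix v assume v: "v \<in> V - (\<Union>i<K. G i)"
    then have v_in: "v \<in> V" and label: "c v < K"
      using rank_block_less[OF fin _ K] unfolding c_def by auto
    then have "v \<notin> G (c v)" using v by auto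
    then obtain w where w: "w \<in> V" "c v < c w" "w < v + int l"
      using v_in unfolding G_def by force
    let ?W = "{w\<in>V. c v < c w}"
    have fin_W: "finite ?W" and "?W \<noteq> {}" using fin w by auto
    then have start_in: "next_start (c v) \<in> ?W" unfolding next_start_def by (rule Min_in)
    have "next_start (c v) \<le> w" unfolding next_start_def using Min_le[OF fin_W] w by auto
    moreover have "v < next_start (c v)"
    proof (rule ccontr)
      assume "\<not> v < next_start (c v)"
      then have "c (next_start (c v)) \<le> c v"
        using rank_block_mono[OF fin _, of "next_start (c v)" v K] start_in unfolding c_def by simp
      then show False using start_in by simp
    qed
    ultimately show "v \<in> (\<Union>i<K. {next_start i - int l ..< next_start i})"
      using label w(3) by (intro UN_I[of "c v"]) auto
  qed
  then have "card (V - (\<Union>i<K. G i)) \<le> card (\<Union>i<K. {next_start i - int l ..< next_start i})"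
    by (intro card_mono) auto
  also have "\<dots> \<le> (\<Sum>i<K. card {next_start i - int l ..< next_start i})" by (rule card_UN_le) auto
  finally have "card (V - (\<Union>i<K. G i)) \<le> K * l" by simp
  moreover have "\<And>i. real (card {v\<in>V. c v = i}) \<le> real (card V) / real K + 1"
    unfolding c_def by (rule card_rank_block_eq_le[OF fin K])
  ultimately show ?thesis by (intro that[of G c]) (auto simp: G_def)
qed

lemma sum_close_pairs_le:
  fixes V :: "int set" and \<pi> :: "nat \<Rightarrow> real" and D :: nat
  assumes fin: "finite V" and \<pi>_nonneg: "\<And>d. 0 \<le> \<pi> d"
  shows "(\<Sum>x\<in>{x\<in>V \<times> V. fst x < snd x \<and> snd x - fst x \<le> int D}. \<pi> (nat (snd x - fst x)))
          \<le> real (card V) * (\<Sum>d=1..D. \<pi> d)"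
proof -
  let ?f = "\<lambda>y::int \<times> nat. (fst y, fst y + int (snd y))"
  have "{x\<in>V \<times> V. fst x < snd x \<and> snd x - fst x \<le> int D} \<subseteq> ?f ` (V \<times> {1..D})"
  proof
    fix x assume "x \<in> {x\<in>V \<times> V. fst x < snd x \<and> snd x - fst x \<le> int D}"
    then have "x = ?f (fst x, nat (snd x - fst x))" "(fst x, nat (snd x - fst x)) \<in> V \<times> {1..D}"
      by auto
    then show "x \<in> ?f ` (V \<times> {1..D})" by blast
  qed
  then have "(\<Sum>x\<in>{x\<in>V \<times> V. fst x < snd x \<and> snd x - fst x \<le> int D}. \<pi> (nat (snd x - fst x)))
      \<le> (\<Sum>x\<in>?f ` (V \<times> {1..D}). \<pi> (nat (snd x - fst x)))"
    using fin \<pi>_nonneg by (intro sum_mono2) auto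
  also have "\<dots> = (\<Sum>y\<in>V \<times> {1..D}. \<pi> (snd y))"
    by (subst sum.reindex) (auto simp: inj_on_def)
  also have "\<dots> = (\<Sum>a\<in>V. \<Sum>d=1..D. \<pi> d)"
    by (subst sum.cartesian_product) (simp add: case_prod_beta)
  also have "\<dots> = real (card V) * (\<Sum>d=1..D. \<pi> d)" by simp
  finally show ?thesis .
qed

lemma card_same_class_pairs_le:
  fixes V :: "int set" and c :: "int \<Rightarrow> nat"
  assumes fin: "finite V" and class_size: "\<And>i. real (card {v\<in>V. c v = i}) \<le> C"
  shows "real (card {x\<in>V \<times> V. c (fst x) = c (snd x)}) \<le> real (card V) * C"
proof -
  have "{x\<in>V \<times> V. c (fst x) = c (snd x)} = Sigma V (\<lambda>a. {b\<in>V. c b = c a})" by auto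
  then have "card {x\<in>V \<times> V. c (fst x) = c (snd x)} = (\<Sum>a\<in>V. card {b\<in>V. c b = c a})"
    using fin by (simp add: card_SigmaI)
  then have "real (card {x\<in>V \<times> V. c (fst x) = c (snd x)}) = (\<Sum>a\<in>V. real (card {b\<in>V. c b = c a}))"
    by (simp only: of_nat_sum[symmetric])
  also have "\<dots> \<le> real (card V) * C" using sum_mono[of V _ "\<lambda>_. C"] class_size by simp
  finally show ?thesis .
qed

lemma sum_pairs_same_block_le:
  fixes V :: "int set" and w :: "int \<times> int \<Rightarrow> real" and c :: "int \<Rightarrow> nat" and D :: nat
  assumes fin: "finite V"
    and w_close: "\<And>a b. a \<in> V \<Longrightarrow> b \<in> V \<Longrightarrow> a < b \<Longrightarrow> b - a \<le> int D \<Longrightarrow> w (a, b) \<le> \<pi> (nat (b - a))"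
    and w_far: "\<And>a b. a \<in> V \<Longrightarrow> b \<in> V \<Longrightarrow> a < b \<Longrightarrow> int D < b - a \<Longrightarrow> w (a, b) \<le> \<beta>"
    and \<pi>_nonneg: "\<And>d. 0 \<le> \<pi> d" and \<beta>_nonneg: "0 \<le> \<beta>"
    and class_size: "\<And>i. real (card {v\<in>V. c v = i}) \<le> C"
  shows "(\<Sum>x\<in>{x\<in>V \<times> V. fst x < snd x \<and> c (fst x) = c (snd x)}. w x)
          \<le> real (card V) * (\<Sum>d=1..D. \<pi> d) + real (card V) * C * \<beta>"
proof -
  let ?P = "{x\<in>V \<times> V. fst x < snd x \<and> c (fst x) = c (snd x)}"
  let ?Close = "{x\<in>?P. snd x - fst x \<le> int D}"
  let ?Far = "{x\<in>?P. int D < snd x - fst x}"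
  have fin_pairs: "finite (V \<times> V)" using fin by simp
  have split: "?P = ?Close \<union> ?Far" by auto
  have "finite ?Close" "finite ?Far" by (auto intro: finite_subset[OF _ fin_pairs])
  then have "(\<Sum>x\<in>?P. w x) = (\<Sum>x\<in>?Close. w x) + (\<Sum>x\<in>?Far. w x)"
    by (subst split, rule sum.union_disjoint) auto
  moreover have "(\<Sum>x\<in>?Close. w x)
      \<le> (\<Sum>x\<in>{x\<in>V \<times> V. fst x < snd x \<and> snd x - fst x \<le> int D}. \<pi> (nat (snd x - fst x)))"
    using fin_pairs \<pi>_nonneg
    by (intro order_trans[OF sum_mono sum_mono2]) (auto intro!: w_close intro: finite_subset)
  moreover have "(\<Sum>x\<in>?Far. w x) \<le> real (card ?Far) * \<beta>"
    using sum_mono[of ?Far w "\<lambda>_. \<beta>"] w_far by auto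
  moreover have "real (card ?Far) * \<beta> \<le> real (card V) * C * \<beta>"
  proof (rule mult_right_mono[OF _ \<beta>_nonneg])
    have "card ?Far \<le> card {x\<in>V \<times> V. c (fst x) = c (snd x)}"
      by (rule card_mono) (auto intro: finite_subset[OF _ fin_pairs])
    then show "real (card ?Far) \<le> real (card V) * C"
      using card_same_class_pairs_le[OF fin class_size] by linarith
  qed
  ultimately show ?thesis using sum_close_pairs_le[of V \<pi> D, OF fin \<pi>_nonneg] by linarith
qed

section \<open>Extremes of a stationary scenery on finite sets of sites\<close>

locale scenery = prob_space N for N :: "'b measure" +
  fixes \<xi> :: "int \<Rightarrow> 'b \<Rightarrow> real"
  assumes measurable_scenery [measurable]: "\<And>k. \<xi> k \<in> borel_measurable N"
begin

abbreviation F :: "int set \<Rightarrow> real \<Rightarrow> real" where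
  "F \<equiv> jointF N \<xi>"

definition exceed :: "int \<Rightarrow> real \<Rightarrow> 'b set" where
  "exceed a u = {\<eta>\<in>space N. u < \<xi> a \<eta>}"

lemma exceed_in_events [measurable]: "exceed a u \<in> events"
  unfolding exceed_def by measurable

lemma sublevel_in_events [measurable]:
  "finite I \<Longrightarrow> {\<eta>\<in>space N. \<forall>i\<in>I. \<xi> i \<eta> \<le> u} \<in> events"
  by measurable

lemma jointF_eq_1_minus_prob_exceed:
  assumes "finite I"
  shows "F I u = 1 - prob (\<Union>a\<in>I. exceed a u)"
proof -
  have "{\<eta>\<in>space N. \<forall>i\<in>I. \<xi> i \<eta> \<le> u} = space N - (\<Union>a\<in>I. exceed a u)"
    by (auto simp: exceed_def not_less)
  then show ?thesis unfolding jointF_def using assms by (simp add: prob_compl)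
qed

lemma jointF_empty [simp]: "F {} u = 1"
  unfolding jointF_def by (simp add: prob_space)

lemma jointF_nonneg: "0 \<le> F I u"
  unfolding jointF_def by simp

lemma jointF_le_1: "F I u \<le> 1"
  unfolding jointF_def by simp

lemma jointF_le_jointF_add_sum:
  assumes "finite V" "U \<subseteq> V"
  shows "F U u \<le> F V u + (\<Sum>b\<in>V - U. prob (exceed b u))"
proof -
  have "{\<eta>\<in>space N. \<forall>i\<in>U. \<xi> i \<eta> \<le> u}
      \<subseteq> {\<eta>\<in>space N. \<forall>i\<in>V. \<xi> i \<eta> \<le> u} \<union> (\<Union>b\<in>V - U. exceed b u)"
    by (auto simp: exceed_def not_less)
  then have "F U u \<le> prob ({\<eta>\<in>space N. \<forall>i\<in>V. \<xi> i \<eta> \<le> u} \<union> (\<Union>b\<in>V - U. exceed b u))"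
    unfolding jointF_def by (rule finite_measure_mono) (use assms in auto)
  also have "\<dots> \<le> F V u + prob (\<Union>b\<in>V - U. exceed b u)"
    unfolding jointF_def by (rule measure_Un_le) (use assms in auto)
  also have "prob (\<Union>b\<in>V - U. exceed b u) \<le> (\<Sum>b\<in>V - U. prob (exceed b u))"
    by (rule finite_measure_subadditive_finite) (use assms in auto)
  finally show ?thesis by simp
qed

lemma jointF_antimono:
  assumes "finite J" "I \<subseteq> J"
  shows "F J u \<le> F I u"
proof -
  have "finite I" using assms by (rule finite_subset[rotated])
  show ?thesis unfolding jointF_def
    by (rule finite_measure_mono) (use assms \<open>finite I\<close> in auto)
qed

definition mixing_bound :: "real \<Rightarrow> nat \<Rightarrow> real \<Rightarrow> bool" where
  "mixing_bound u m \<alpha> \<longleftrightarrow>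
     (\<forall>I J. finite I \<longrightarrow> finite J \<longrightarrow> I \<noteq> {} \<longrightarrow> J \<noteq> {} \<longrightarrow> (\<forall>i\<in>I. \<forall>j\<in>J. i + int m \<le> j) \<longrightarrow>
        \<bar>F (I \<union> J) u - F I u * F J u\<bar> \<le> \<alpha>)"

lemma mixing_boundD:
  assumes "mixing_bound u m \<alpha>" "finite I" "finite J" "I \<noteq> {}" "J \<noteq> {}"
    and "\<And>i j. i \<in> I \<Longrightarrow> j \<in> J \<Longrightarrow> i + int m \<le> j"
  shows "\<bar>F (I \<union> J) u - F I u * F J u\<bar> \<le> \<alpha>"
  using assms unfolding mixing_bound_def by blast

lemma condD_imp_mixing_bound: "condD N \<xi> u a l \<Longrightarrow> mixing_bound (u n) m (a n m)"
  unfolding condD_def mixing_bound_def by blast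

lemma mixing_bound_nonneg:
  assumes "mixing_bound u m \<alpha>"
  shows "0 \<le> \<alpha>"
proof -
  have "\<bar>F ({0} \<union> {int m}) u - F {0} u * F {int m} u\<bar> \<le> \<alpha>"
    by (rule mixing_boundD[OF assms]) auto
  then show ?thesis by linarith
qed

lemma jointF_UN_approx_prod:
  fixes G :: "nat \<Rightarrow> int set"
  assumes mix: "mixing_bound u m \<alpha>" and fin: "\<And>i. finite (G i)"
    and sep: "\<And>i j v w. i < j \<Longrightarrow> v \<in> G i \<Longrightarrow> w \<in> G j \<Longrightarrow> v + int m \<le> w"
  shows "\<bar>F (\<Union>i<K. G i) u - (\<Prod>i<K. F (G i) u)\<bar> \<le> real K * \<alpha>"
proof (induction K)
  case 0
  then show ?case by simp
next
  case (Suc K)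
  let ?I = "\<Union>i<K. G i" and ?J = "G K"
  have split: "\<bar>F (?I \<union> ?J) u - F ?I u * F ?J u\<bar> \<le> \<alpha>"
  proof (cases "?I = {} \<or> ?J = {}")
    case True
    then show ?thesis using mixing_bound_nonneg[OF mix] by auto
  next
    case False
    then show ?thesis using fin sep by (intro mixing_boundD[OF mix]) auto
  qed
  have "\<bar>F ?I u * F ?J u - (\<Prod>i<K. F (G i) u) * F ?J u\<bar>
      = \<bar>F ?I u - (\<Prod>i<K. F (G i) u)\<bar> * F ?J u"
    by (simp add: abs_mult jointF_nonneg left_diff_distrib[symmetric])
  also have "\<dots> \<le> \<bar>F ?I u - (\<Prod>i<K. F (G i) u)\<bar>"
    using jointF_le_1[of ?J u] by (simp add: mult_left_le)
  finally have "\<bar>F ?I u * F ?J u - (\<Prod>i<K. F (G i) u) * F ?J u\<bar> \<le> real K * \<alpha>"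
    using Suc.IH by linarith
  moreover have "(\<Union>i<Suc K. G i) = ?I \<union> ?J" by (auto simp: lessThan_Suc)
  ultimately show ?case using split by (simp add: algebra_simps)
qed

end

locale stationary_scenery = scenery +
  assumes stationary: "stationary_seq N \<xi>"
begin

lemma prob_shift_eq:
  assumes Q: "Q \<in> sets (Pi\<^sub>M (UNIV :: int set) (\<lambda>_. borel))"
  shows "prob {\<eta>\<in>space N. (\<lambda>k. \<xi> (k + h) \<eta>) \<in> Q} = prob {\<eta>\<in>space N. (\<lambda>k. \<xi> k \<eta>) \<in> Q}"
proof -
  have shifted: "(\<lambda>\<eta> k. \<xi> (k + h) \<eta>) \<in> N \<rightarrow>\<^sub>M Pi\<^sub>M UNIV (\<lambda>_. borel)"
    and unshifted: "(\<lambda>\<eta> k. \<xi> k \<eta>) \<in> N \<rightarrow>\<^sub>M Pi\<^sub>M UNIV (\<lambda>_. borel)"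
    by (rule measurable_PiM_single'; simp add: space_PiM)+
  have "distr N (Pi\<^sub>M UNIV (\<lambda>_. borel)) (\<lambda>\<eta> k. \<xi> (k + h) \<eta>)
      = distr N (Pi\<^sub>M UNIV (\<lambda>_. borel)) (\<lambda>\<eta> k. \<xi> k \<eta>)"
    using stationary unfolding stationary_seq_def by blast
  then have "measure N ((\<lambda>\<eta> k. \<xi> (k + h) \<eta>) -` Q \<inter> space N)
      = measure N ((\<lambda>\<eta> k. \<xi> k \<eta>) -` Q \<inter> space N)"
    using Q shifted unshifted by (metis measure_distr)
  then show ?thesis by (simp add: vimage_def Int_def conj_commute)
qed

definition exceed_prob :: "real \<Rightarrow> real" where
  "exceed_prob u = prob (exceed 0 u)"

definition pair_exceed_prob :: "real \<Rightarrow> nat \<Rightarrow> real" where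
  "pair_exceed_prob u d = prob (exceed 0 u \<inter> exceed (int d) u)"

lemma pair_exceed_prob_eq_measure:
  "pair_exceed_prob u j = measure N {\<eta> \<in> space N. \<xi> 0 \<eta> > u \<and> \<xi> (int j) \<eta> > u}"
  unfolding pair_exceed_prob_def exceed_def by (rule arg_cong[where f = "measure N"]) auto

lemma prob_exceed: "prob (exceed a u) = exceed_prob u"
proof -
  have "{f :: int \<Rightarrow> real. u < f 0} = {f \<in> space (Pi\<^sub>M UNIV (\<lambda>_. borel)). u < f 0}"
    by (simp add: space_PiM)
  also have "\<dots> \<in> sets (Pi\<^sub>M UNIV (\<lambda>_. borel))" by measurable
  finally show ?thesis
    using prob_shift_eq[of "{f. u < f 0}" a] unfolding exceed_prob_def exceed_def by simp
qed

lemma prob_exceed_pair: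
  assumes "a \<le> b"
  shows "prob (exceed a u \<inter> exceed b u) = pair_exceed_prob u (nat (b - a))"
proof -
  let ?Q = "{f :: int \<Rightarrow> real. u < f 0 \<and> u < f (b - a)}"
  have "?Q = {f \<in> space (Pi\<^sub>M UNIV (\<lambda>_. borel)). u < f 0 \<and> u < f (b - a)}"
    by (simp add: space_PiM)
  also have "\<dots> \<in> sets (Pi\<^sub>M UNIV (\<lambda>_. borel))" by measurable
  finally have "prob {\<eta>\<in>space N. (\<lambda>k. \<xi> (k + a) \<eta>) \<in> ?Q} = prob {\<eta>\<in>space N. (\<lambda>k. \<xi> k \<eta>) \<in> ?Q}"
    by (rule prob_shift_eq)
  moreover have "exceed a u \<inter> exceed b u = {\<eta>\<in>space N. (\<lambda>k. \<xi> (k + a) \<eta>) \<in> ?Q}"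
    and "exceed 0 u \<inter> exceed (int (nat (b - a))) u = {\<eta>\<in>space N. (\<lambda>k. \<xi> k \<eta>) \<in> ?Q}"
    using assms unfolding exceed_def by auto
  ultimately show ?thesis unfolding pair_exceed_prob_def by simp
qed

lemma prob_exceed_pair_le_mixing:
  assumes mix: "mixing_bound u l \<alpha>" and sep: "a + int l \<le> b"
  shows "prob (exceed a u \<inter> exceed b u) \<le> (exceed_prob u)\<^sup>2 + \<alpha>"
proof -
  let ?p = "exceed_prob u"
  have "\<bar>F ({a} \<union> {b}) u - F {a} u * F {b} u\<bar> \<le> \<alpha>"
    by (rule mixing_boundD[OF mix]) (use sep in auto)
  moreover have "F {a} u = 1 - ?p" "F {b} u = 1 - ?p"
    by (simp_all add: jointF_eq_1_minus_prob_exceed prob_exceed)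
  moreover have "F ({a} \<union> {b}) u = 1 - prob (exceed a u \<union> exceed b u)"
    using jointF_eq_1_minus_prob_exceed[of "{a} \<union> {b}" u] by (simp add: Un_commute)
  moreover have "prob (exceed a u \<union> exceed b u)
      = prob (exceed a u) + prob (exceed b u) - prob (exceed a u \<inter> exceed b u)"
    by (rule measure_Un3) (simp_all add: fmeasurable_eq_sets)
  ultimately show ?thesis by (simp add: prob_exceed power2_eq_square algebra_simps)
qed

definition exceed_pairs :: "real \<Rightarrow> int set \<Rightarrow> real" where
  "exceed_pairs u G = (\<Sum>(a, b)\<in>{(a, b)\<in>G \<times> G. a < b}. prob (exceed a u \<inter> exceed b u))"

lemma jointF_block_bounds:
  assumes "finite G"
  shows "1 - real (card G) * exceed_prob u \<le> F G u"
    and "F G u \<le> 1 - real (card G) * exceed_prob u + exceed_pairs u G"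
proof -
  have "prob (\<Union>a\<in>G. exceed a u) \<le> (\<Sum>a\<in>G. prob (exceed a u))"
    by (rule finite_measure_subadditive_finite) (use assms in auto)
  then show "1 - real (card G) * exceed_prob u \<le> F G u"
    using assms by (simp add: jointF_eq_1_minus_prob_exceed prob_exceed)
  have "(\<Sum>a\<in>G. prob (exceed a u)) - exceed_pairs u G \<le> prob (\<Union>a\<in>G. exceed a u)"
    unfolding exceed_pairs_def by (rule bonferroni_lower) (use assms in auto)
  then show "F G u \<le> 1 - real (card G) * exceed_prob u + exceed_pairs u G"
    using assms by (simp add: jointF_eq_1_minus_prob_exceed prob_exceed)
qed

lemma sum_exceed_pairs_le:
  fixes V :: "int set" and G :: "nat \<Rightarrow> int set" and c :: "int \<Rightarrow> nat" and l D :: nat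
  assumes fin: "finite V" and blocks: "\<And>i. G i \<subseteq> {v\<in>V. c v = i}"
    and class_size: "\<And>i. real (card {v\<in>V. c v = i}) \<le> C"
    and mix: "mixing_bound u l \<alpha>" and l_le: "l \<le> D + 1"
  shows "(\<Sum>i<K. exceed_pairs u (G i))
           \<le> real (card V) * (\<Sum>d=1..D. pair_exceed_prob u d)
             + real (card V) * C * ((exceed_prob u)\<^sup>2 + \<alpha>)"
proof -
  let ?w = "\<lambda>(a, b). prob (exceed a u \<inter> exceed b u)"
  let ?pairs = "\<lambda>i. {(a, b)\<in>G i \<times> G i. a < b}"
  have fin_G: "finite (G i)" for i using finite_subset[OF _ fin, of "G i"] blocks by blast
  have fin_pairs: "finite (?pairs i)" for i
    by (rule finite_subset[of _ "G i \<times> G i"]) (use fin_G in auto)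
  have disjoint: "G i \<inter> G j = {}" if "i \<noteq> j" for i j using blocks that by blast
  have "(\<Sum>i<K. exceed_pairs u (G i)) = (\<Sum>x\<in>(\<Union>i<K. ?pairs i). ?w x)"
    unfolding exceed_pairs_def
  proof (rule sum.UNION_disjoint[symmetric])
    show "\<forall>i\<in>{..<K}. finite (?pairs i)" using fin_pairs by blast
    show "\<forall>i\<in>{..<K}. \<forall>j\<in>{..<K}. i \<noteq> j \<longrightarrow> ?pairs i \<inter> ?pairs j = {}"
      using disjoint by blast
  qed simp
  also have "\<dots> \<le> (\<Sum>x\<in>{x\<in>V \<times> V. fst x < snd x \<and> c (fst x) = c (snd x)}. ?w x)"
  proof (rule sum_mono2)
    show "finite {x\<in>V \<times> V. fst x < snd x \<and> c (fst x) = c (snd x)}"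
      by (rule finite_subset[of _ "V \<times> V"]) (use fin in auto)
    show "(\<Union>i<K. ?pairs i) \<subseteq> {x\<in>V \<times> V. fst x < snd x \<and> c (fst x) = c (snd x)}"
    proof
      fix x assume "x \<in> (\<Union>i<K. ?pairs i)"
      then obtain i where "x \<in> ?pairs i" by blast
      then show "x \<in> {x\<in>V \<times> V. fst x < snd x \<and> c (fst x) = c (snd x)}"
        using blocks[of i] by (cases x) auto
    qed
  qed (auto simp: split_beta)
  also have "\<dots> \<le> real (card V) * (\<Sum>d=1..D. pair_exceed_prob u d)
                  + real (card V) * C * ((exceed_prob u)\<^sup>2 + \<alpha>)"
  proof (rule sum_pairs_same_block_le[OF fin _ _ _ _ class_size])
    show "?w (a, b) \<le> pair_exceed_prob u (nat (b - a))" if "a < b" for a b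
      using prob_exceed_pair[of a b u] that by simp
    show "?w (a, b) \<le> (exceed_prob u)\<^sup>2 + \<alpha>" if "a < b" "int D < b - a" for a b
      using prob_exceed_pair_le_mixing[OF mix, of a b] that l_le by simp
    show "0 \<le> (exceed_prob u)\<^sup>2 + \<alpha>" using mixing_bound_nonneg[OF mix] by simp
  qed (auto simp: pair_exceed_prob_def)
  finally show ?thesis .
qed

end

section \<open>Leadbetter's block argument\<close>

lemma tendsto_div_real_mult:
  fixes x y :: "nat \<Rightarrow> real"
  assumes "(\<lambda>n. x n / real n) \<longlonglongrightarrow> a" and "(\<lambda>n. real n * y n) \<longlonglongrightarrow> b"
  shows "(\<lambda>n. x n * y n) \<longlonglongrightarrow> a * b"
proof -
  have "(\<lambda>n. (x n / real n) * (real n * y n)) \<longlonglongrightarrow> a * b"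
    using assms by (rule tendsto_mult)
  moreover have "eventually (\<lambda>n. (x n / real n) * (real n * y n) = x n * y n) sequentially"
    using eventually_gt_at_top[of 0] by eventually_elim simp
  ultimately show ?thesis by (rule Lim_transform_eventually)
qed

lemma tendsto_0_if_real_mult_tendsto:
  fixes y :: "nat \<Rightarrow> real"
  assumes "(\<lambda>n. real n * y n) \<longlonglongrightarrow> b"
  shows "y \<longlonglongrightarrow> 0"
  using tendsto_div_real_mult[OF lim_inverse_n' assms] by simp

lemma block_prob_tendsto_0:
  fixes p :: "nat \<Rightarrow> real" and k :: "nat \<Rightarrow> nat"
  assumes np: "(\<lambda>n. real n * p n) \<longlonglongrightarrow> \<tau>" and k: "filterlim k at_top sequentially"
  shows "(\<lambda>n. (real n / real (k n) + 1) * p n) \<longlonglongrightarrow> 0"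
proof -
  have inv_k: "(\<lambda>n. 1 / real (k n)) \<longlonglongrightarrow> 0"
    using tendsto_inverse_0_at_top[OF filterlim_compose[OF filterlim_real_sequentially k]]
    by (simp add: divide_inverse)
  have "(\<lambda>n. (real n * p n) * (1 / real (k n)) + p n) \<longlonglongrightarrow> \<tau> * 0 + 0"
    by (intro tendsto_intros np inv_k tendsto_0_if_real_mult_tendsto[OF np])
  then show ?thesis by (simp add: field_simps)
qed

lemma eventually_mult_le_if_tendsto_0:
  fixes k l :: "nat \<Rightarrow> nat"
  assumes "(\<lambda>n. real (k n * l n) / real n) \<longlonglongrightarrow> 0"
  shows "eventually (\<lambda>n. k n * l n \<le> n) sequentially"
proof -
  have "eventually (\<lambda>n. real (k n * l n) / real n < 1) sequentially"
    using order_tendstoD(2)[OF assms, of 1] by simp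
  then show ?thesis using eventually_gt_at_top[of 0]
  proof eventually_elim
    case (elim n)
    then have "real (k n * l n) < real n" by (simp add: divide_less_eq del: of_nat_mult)
    then show ?case by (simp only: of_nat_less_iff)
  qed
qed

lemma tendsto_block_bounds:
  fixes R L p c e :: "nat \<Rightarrow> real"
  assumes Rp: "(\<lambda>n. R n * p n) \<longlonglongrightarrow> r * \<tau>" and Lp: "(\<lambda>n. L n * p n) \<longlonglongrightarrow> 0"
    and e: "e \<longlonglongrightarrow> 0" and c: "c \<longlonglongrightarrow> 0"
  shows "(\<lambda>n. exp (- ((R n - L n) * p n)) + e n) \<longlonglongrightarrow> exp (- \<tau> * r)"
    and "(\<lambda>n. exp (- (R n * p n) - 2 * c n * (R n * p n)) - e n - L n * p n) \<longlonglongrightarrow> exp (- \<tau> * r)"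
proof -
  have "(\<lambda>n. (R n - L n) * p n) \<longlonglongrightarrow> r * \<tau> - 0"
    unfolding left_diff_distrib by (rule tendsto_diff[OF Rp Lp])
  from tendsto_add[OF tendsto_exp[OF tendsto_minus[OF this]] e]
  show "(\<lambda>n. exp (- ((R n - L n) * p n)) + e n) \<longlonglongrightarrow> exp (- \<tau> * r)"
    by (simp add: mult.commute)
  have "(\<lambda>n. 2 * c n * (R n * p n)) \<longlonglongrightarrow> 2 * 0 * (r * \<tau>)"
    by (rule tendsto_mult[OF tendsto_mult[OF tendsto_const c] Rp])
  from tendsto_diff[OF tendsto_diff[OF tendsto_exp[OF tendsto_diff[OF tendsto_minus[OF Rp] this]] e] Lp]
  show "(\<lambda>n. exp (- (R n * p n) - 2 * c n * (R n * p n)) - e n - L n * p n) \<longlonglongrightarrow> exp (- \<tau> * r)"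
    by (simp add: mult.commute)
qed

lemma leadbetter_error_tendsto_0:
  fixes p \<alpha> \<sigma> :: "nat \<Rightarrow> real" and k :: "nat \<Rightarrow> nat"
  assumes np: "(\<lambda>n. real n * p n) \<longlonglongrightarrow> \<tau>" and k: "filterlim k at_top sequentially"
    and k_le: "eventually (\<lambda>n. k n \<le> n) sequentially"
    and \<alpha>: "(\<lambda>n. real n ^ 2 / real (k n) * \<alpha> n) \<longlonglongrightarrow> 0" and \<alpha>_nonneg: "\<And>n. 0 \<le> \<alpha> n"
    and \<sigma>: "(\<lambda>n. real n * \<sigma> n) \<longlonglongrightarrow> 0"
  shows "(\<lambda>n. real n * \<sigma> n + real n * (real n / real (k n) + 1) * ((p n)\<^sup>2 + \<alpha> n)
            + real (k n) * \<alpha> n) \<longlonglongrightarrow> 0"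
proof -
  have "(\<lambda>n. (real n * p n) * ((real n / real (k n) + 1) * p n)) \<longlonglongrightarrow> \<tau> * 0"
    by (intro tendsto_mult np block_prob_tendsto_0[OF np k])
  then have p_part: "(\<lambda>n. real n * (real n / real (k n) + 1) * (p n)\<^sup>2) \<longlonglongrightarrow> 0"
    by (simp add: power2_eq_square mult.assoc mult.left_commute)
  have "(\<lambda>n. real n * (real n / real (k n) + 1) * \<alpha> n + real (k n) * \<alpha> n) \<longlonglongrightarrow> 0"
  proof (rule tendsto_sandwich[of "\<lambda>n. 0" _ _ "\<lambda>n. 3 * (real n ^ 2 / real (k n) * \<alpha> n)"])
    show "eventually (\<lambda>n. 0 \<le> real n * (real n / real (k n) + 1) * \<alpha> n + real (k n) * \<alpha> n) sequentially"
      using \<alpha>_nonneg by (auto intro!: always_eventually)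
    have "eventually (\<lambda>n. 0 < k n) sequentially"
      using filterlim_at_top[THEN iffD1, OF k, rule_format, of 1] by (rule eventually_mono) simp
    then show "eventually (\<lambda>n. real n * (real n / real (k n) + 1) * \<alpha> n + real (k n) * \<alpha> n
                 \<le> 3 * (real n ^ 2 / real (k n) * \<alpha> n)) sequentially"
      using k_le
    proof eventually_elim
      case (elim n)
      then have k_pos: "0 < real (k n)" and k_le_n: "real (k n) \<le> real n" by simp_all
      have "real n \<le> real n ^ 2 / real (k n)" "real (k n) \<le> real n ^ 2 / real (k n)"
        using k_pos k_le_n by (simp_all add: field_simps power2_eq_square mult_mono mult_left_mono)
      then have "real n * \<alpha> n \<le> real n ^ 2 / real (k n) * \<alpha> n"
        "real (k n) * \<alpha> n \<le> real n ^ 2 / real (k n) * \<alpha> n"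
        by (blast intro: mult_right_mono \<alpha>_nonneg)+
      moreover have "real n * (real n / real (k n) + 1) * \<alpha> n = real n ^ 2 / real (k n) * \<alpha> n + real n * \<alpha> n"
        using k_pos by (simp add: field_simps power2_eq_square)
      ultimately show ?case by (simp only:)
    qed
  qed (use tendsto_mult[OF tendsto_const \<alpha>, of 3] in simp_all)
  from tendsto_add[OF tendsto_add[OF \<sigma> p_part] this] show ?thesis
    by (simp only: distrib_left add.assoc add_0_left)
qed

context stationary_scenery
begin

context
  fixes V :: "int set" and G :: "nat \<Rightarrow> int set" and K l :: nat and u \<alpha> :: real
  assumes finite_V: "finite V"
    and blocks_subset: "\<And>i. G i \<subseteq> V"
    and blocks_disjoint: "\<And>i j. i \<noteq> j \<Longrightarrow> G i \<inter> G j = {}"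
    and blocks_separated: "\<And>i j v w. i < j \<Longrightarrow> v \<in> G i \<Longrightarrow> w \<in> G j \<Longrightarrow> v + int l \<le> w"
    and mixing: "mixing_bound u l \<alpha>"
begin

lemma finite_block: "finite (G i)"
  using finite_subset[OF blocks_subset finite_V] .

lemma sum_block_probs:
  "(\<Sum>i<K. real (card (G i)) * exceed_prob u) = real (card (\<Union>i<K. G i)) * exceed_prob u"
proof -
  have "card (\<Union>i<K. G i) = (\<Sum>i<K. card (G i))"
    by (rule card_UN_disjoint) (auto simp: finite_block blocks_disjoint)
  then show ?thesis by (simp add: sum_distrib_right)
qed

lemma jointF_UN_blocks_approx: "\<bar>F (\<Union>i<K. G i) u - (\<Prod>i<K. F (G i) u)\<bar> \<le> real K * \<alpha>"
  using jointF_UN_approx_prod[OF mixing finite_block blocks_separated] .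

lemma jointF_upper_bound_by_blocks:
  assumes block_small: "\<And>i. real (card (G i)) * exceed_prob u \<le> 1"
  shows "F V u \<le> exp (- (real (card (\<Union>i<K. G i)) * exceed_prob u))
                  + (\<Sum>i<K. exceed_pairs u (G i)) + real K * \<alpha>"
proof -
  let ?s = "\<lambda>i. real (card (G i)) * exceed_prob u"
  have block_error: "F (G i) u - (1 - ?s i) \<le> exceed_pairs u (G i)" for i
    using jointF_block_bounds(2)[OF finite_block, of i u] by linarith
  have "(\<Prod>i<K. F (G i) u) - (\<Prod>i<K. 1 - ?s i) \<le> (\<Sum>i<K. F (G i) u - (1 - ?s i))"
    using jointF_block_bounds(1)[OF finite_block] jointF_le_1 block_small
    by (intro prod_diff_le_sum_diff) auto
  also have "\<dots> \<le> (\<Sum>i<K. exceed_pairs u (G i))"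
    using block_error by (rule sum_mono)
  finally have "(\<Prod>i<K. F (G i) u) - (\<Prod>i<K. 1 - ?s i) \<le> (\<Sum>i<K. exceed_pairs u (G i))" .
  moreover have "F V u \<le> F (\<Union>i<K. G i) u"
    by (rule jointF_antimono[OF finite_V]) (use blocks_subset in auto)
  moreover have "(\<Prod>i<K. 1 - ?s i) \<le> exp (- (\<Sum>i<K. ?s i))"
    using block_small by (intro prod_one_minus_le_exp) auto
  ultimately show ?thesis
    using jointF_UN_blocks_approx unfolding sum_block_probs by linarith
qed

lemma jointF_lower_bound_by_blocks:
  assumes block_small: "\<And>i. real (card (G i)) * exceed_prob u \<le> c" and c_le: "c \<le> 1/2"
  shows "exp (- (real (card (\<Union>i<K. G i)) * exceed_prob u)
              - 2 * c * (real (card (\<Union>i<K. G i)) * exceed_prob u))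
           - real K * \<alpha> - real (card (V - (\<Union>i<K. G i))) * exceed_prob u \<le> F V u"
proof -
  let ?s = "\<lambda>i. real (card (G i)) * exceed_prob u"
  let ?S = "real (card (\<Union>i<K. G i)) * exceed_prob u"
  have s_nonneg: "0 \<le> ?s i" for i by (simp add: exceed_prob_def)
  have s_half: "?s i \<le> 1/2" and s_le_1: "?s i \<le> 1" for i
    using block_small[of i] c_le by linarith+
  have "F (\<Union>i<K. G i) u \<le> F V u + (\<Sum>b\<in>V - (\<Union>i<K. G i). prob (exceed b u))"
    by (rule jointF_le_jointF_add_sum[OF finite_V]) (use blocks_subset in auto)
  then have drop_rest: "F (\<Union>i<K. G i) u \<le> F V u + real (card (V - (\<Union>i<K. G i))) * exceed_prob u"
    by (simp add: prob_exceed)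
  have "(\<Prod>i<K. 1 - ?s i) \<le> (\<Prod>i<K. F (G i) u)"
    using jointF_block_bounds(1)[OF finite_block] s_le_1 by (intro prod_mono) auto
  moreover have "exp (- (\<Sum>i<K. ?s i) - 2 * (\<Sum>i<K. (?s i)\<^sup>2)) \<le> (\<Prod>i<K. 1 - ?s i)"
    using s_nonneg s_half by (intro exp_le_prod_one_minus) auto
  moreover have "exp (- ?S - 2 * c * ?S) \<le> exp (- (\<Sum>i<K. ?s i) - 2 * (\<Sum>i<K. (?s i)\<^sup>2))"
  proof -
    have "(\<Sum>i<K. (?s i)\<^sup>2) \<le> (\<Sum>i<K. c * ?s i)"
      using s_nonneg block_small by (intro sum_mono) (simp add: power2_eq_square mult_right_mono)
    then show ?thesis by (simp add: sum_distrib_left[symmetric] sum_block_probs)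
  qed
  ultimately show ?thesis using drop_rest jointF_UN_blocks_approx by linarith
qed

end

definition block_error :: "real \<Rightarrow> nat \<Rightarrow> nat \<Rightarrow> nat \<Rightarrow> real \<Rightarrow> real" where
  "block_error u n K D \<alpha> =
     real n * (\<Sum>d=1..D. pair_exceed_prob u d)
     + real n * (real n / real K + 1) * ((exceed_prob u)\<^sup>2 + \<alpha>) + real K * \<alpha>"

lemma exists_blocks_for_bound:
  fixes V :: "int set" and n K l D :: nat and u \<alpha> :: real
  assumes fin: "finite V" and card_V: "card V \<le> n" and K: "0 < K"
    and mix: "mixing_bound u l \<alpha>" and l_le: "l \<le> D + 1"
  obtains G :: "nat \<Rightarrow> int set"
  where "\<And>i. G i \<subseteq> V" and "\<And>i j. i \<noteq> j \<Longrightarrow> G i \<inter> G j = {}"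
    and "\<And>i j v w. i < j \<Longrightarrow> v \<in> G i \<Longrightarrow> w \<in> G j \<Longrightarrow> v + int l \<le> w"
    and "card (V - (\<Union>i<K. G i)) \<le> K * l"
    and "\<And>i. real (card (G i)) \<le> real n / real K + 1"
    and "(\<Sum>i<K. exceed_pairs u (G i)) + real K * \<alpha> \<le> block_error u n K D \<alpha>"
proof -
  obtain G lab where blocks: "\<And>i. G i \<subseteq> {v\<in>V. lab v = i}"
    and sep: "\<And>i j v w. i < j \<Longrightarrow> v \<in> G i \<Longrightarrow> w \<in> G j \<Longrightarrow> v + int l \<le> w"
    and rest: "card (V - (\<Union>i<K. G i)) \<le> K * l"
    and lab_size: "\<And>i. real (card {v\<in>V. lab v = i}) \<le> real (card V) / real K + 1"
    using exists_separated_blocks[OF fin K, of l] by blast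
  define C where "C = real n / real K + 1"
  have "real (card V) / real K \<le> real n / real K" using card_V by (simp add: divide_right_mono)
  then have lab_size_C: "real (card {v\<in>V. lab v = i}) \<le> C" for i
    using lab_size[of i] unfolding C_def by linarith
  have "real (card (G i)) \<le> C" for i
  proof -
    have "card (G i) \<le> card {v\<in>V. lab v = i}" using blocks fin by (intro card_mono) auto
    then show ?thesis using lab_size_C[of i] by linarith
  qed
  moreover have "(\<Sum>i<K. exceed_pairs u (G i)) + real K * \<alpha> \<le> block_error u n K D \<alpha>"
  proof -
    have "(\<Sum>i<K. exceed_pairs u (G i))
        \<le> real (card V) * (\<Sum>d=1..D. pair_exceed_prob u d) + real (card V) * C * ((exceed_prob u)\<^sup>2 + \<alpha>)"
      by (rule sum_exceed_pairs_le[OF fin blocks lab_size_C mix l_le])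
    also have "\<dots> \<le> real n * (\<Sum>d=1..D. pair_exceed_prob u d) + real n * C * ((exceed_prob u)\<^sup>2 + \<alpha>)"
      using card_V mixing_bound_nonneg[OF mix] unfolding C_def
      by (intro add_mono mult_right_mono sum_nonneg) (auto simp: pair_exceed_prob_def)
    finally show ?thesis unfolding block_error_def C_def by simp
  qed
  moreover have "G i \<subseteq> V" and "i \<noteq> j \<Longrightarrow> G i \<inter> G j = {}" for i j
    using blocks by blast+
  ultimately show ?thesis using that sep rest unfolding C_def by blast
qed

lemma jointF_two_sided_bound:
  fixes V :: "int set" and n K l D :: nat and u \<alpha> :: real
  defines "p \<equiv> exceed_prob u" and "c \<equiv> (real n / real K + 1) * exceed_prob u"
  assumes fin: "finite V" and card_V: "card V \<le> n" and K: "0 < K"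
    and mix: "mixing_bound u l \<alpha>" and l_le: "l \<le> D + 1" and small: "c \<le> 1/2"
  shows "F V u \<le> exp (- ((real (card V) - real (K * l)) * p)) + block_error u n K D \<alpha>"
    and "exp (- (real (card V) * p) - 2 * c * (real (card V) * p)) - block_error u n K D \<alpha>
           - real (K * l) * p \<le> F V u"
proof -
  obtain G where subset: "\<And>i. G i \<subseteq> V" and disjoint: "\<And>i j. i \<noteq> j \<Longrightarrow> G i \<inter> G j = {}"
    and sep: "\<And>i j v w. i < j \<Longrightarrow> v \<in> G i \<Longrightarrow> w \<in> G j \<Longrightarrow> v + int l \<le> w"
    and rest: "card (V - (\<Union>i<K. G i)) \<le> K * l"
    and size: "\<And>i. real (card (G i)) \<le> real n / real K + 1"
    and pairs: "(\<Sum>i<K. exceed_pairs u (G i)) + real K * \<alpha> \<le> block_error u n K D \<alpha>"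
    using exists_blocks_for_bound[OF fin card_V K mix l_le] by blast
  define U where "U = (\<Union>i<K. G i)"
  have p_nonneg: "0 \<le> p" unfolding p_def exceed_prob_def by simp
  have block_small: "real (card (G i)) * exceed_prob u \<le> c" for i
    unfolding c_def using size[of i] p_nonneg unfolding p_def by (rule mult_right_mono)
  have card_U: "real (card V) - real (K * l) \<le> real (card U)" "card U \<le> card V"
  proof -
    have "U \<subseteq> V" unfolding U_def using subset by auto
    then have "card V = card U + card (V - U)" "card U \<le> card V"
      using fin by (simp_all add: card_Diff_subset card_mono finite_subset)
    then show "real (card V) - real (K * l) \<le> real (card U)" "card U \<le> card V"
      using rest unfolding U_def by linarith+
  qed
  have "F V u \<le> exp (- (real (card U) * p)) + (\<Sum>i<K. exceed_pairs u (G i)) + real K * \<alpha>"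
    unfolding U_def p_def
  proof (rule jointF_upper_bound_by_blocks[OF fin subset disjoint sep mix])
    show "real (card (G i)) * exceed_prob u \<le> 1" for i using block_small[of i] small by linarith
  qed
  moreover have "exp (- (real (card U) * p)) \<le> exp (- ((real (card V) - real (K * l)) * p))"
    using card_U p_nonneg by (simp add: mult_right_mono)
  ultimately show "F V u \<le> exp (- ((real (card V) - real (K * l)) * p)) + block_error u n K D \<alpha>"
    using pairs by linarith
  have "exp (- (real (card U) * p) - 2 * c * (real (card U) * p))
          - real K * \<alpha> - real (card (V - U)) * p \<le> F V u"
    unfolding U_def p_def by (rule jointF_lower_bound_by_blocks[OF fin subset disjoint sep mix block_small small])
  moreover have "exp (- (real (card V) * p) - 2 * c * (real (card V) * p))
      \<le> exp (- (real (card U) * p) - 2 * c * (real (card U) * p))"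
  proof -
    have "0 \<le> c" unfolding c_def using p_nonneg by (simp add: p_def)
    moreover have "real (card U) * p \<le> real (card V) * p"
      using card_U(2) p_nonneg by (simp add: mult_right_mono)
    ultimately have "2 * c * (real (card U) * p) \<le> 2 * c * (real (card V) * p)"
      by (simp add: mult_left_mono)
    with \<open>real (card U) * p \<le> real (card V) * p\<close> show ?thesis by simp
  qed
  moreover have "real (card (V - U)) * p \<le> real (K * l) * p"
    unfolding U_def by (intro mult_right_mono p_nonneg) (simp only: of_nat_le_iff rest)
  moreover have "0 \<le> (\<Sum>i<K. exceed_pairs u (G i))"
    unfolding exceed_pairs_def by (intro sum_nonneg) (simp add: split_beta)
  ultimately show "exp (- (real (card V) * p) - 2 * c * (real (card V) * p)) - block_error u n K D \<alpha>
      - real (K * l) * p \<le> F V u"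
    using pairs by linarith
qed

end

context stationary_scenery
begin

theorem jointF_tendsto_exp:
  fixes V :: "nat \<Rightarrow> int set"
  assumes tail: "(\<lambda>n. real n * exceed_prob (u n)) \<longlonglongrightarrow> \<tau>"
    and D: "condD N \<xi> u a l" and D': "condD' N \<xi> u a l"
    and fin: "\<And>n. finite (V n)" and card_V: "\<And>n. card (V n) \<le> n"
    and ratio: "(\<lambda>n. real (card (V n)) / real n) \<longlonglongrightarrow> r"
  shows "(\<lambda>n. F (V n) (u n)) \<longlonglongrightarrow> exp (- \<tau> * r)"
proof -
  obtain k :: "nat \<Rightarrow> nat" where k: "filterlim k at_top sequentially"
    and \<alpha>_small: "(\<lambda>n. real n ^ 2 / real (k n) * a n (l n)) \<longlonglongrightarrow> 0"
    and kl: "(\<lambda>n. real (k n * l n) / real n) \<longlonglongrightarrow> 0"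
    and pairs: "(\<lambda>n. real n * (\<Sum>j=1..n div k n. pair_exceed_prob (u n) j)) \<longlonglongrightarrow> 0"
    using D' unfolding condD'_def pair_exceed_prob_eq_measure by blast
  define p where "p n = exceed_prob (u n)" for n
  define c where "c n = (real n / real (k n) + 1) * p n" for n
  define err where "err n = block_error (u n) n (k n) (n div k n) (a n (l n))" for n
  have mix: "mixing_bound (u n) (l n) (a n (l n))" for n by (rule condD_imp_mixing_bound[OF D])
  have l_pos: "0 < l n" for n using D unfolding condD_def by blast
  have ev_kl: "eventually (\<lambda>n. k n * l n \<le> n) sequentially"
    by (rule eventually_mult_le_if_tendsto_0[OF kl])
  have ev_k_pos: "eventually (\<lambda>n. 0 < k n) sequentially"
    using filterlim_at_top[THEN iffD1, OF k, rule_format, of 1] by (rule eventually_mono) simp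
  have ev_k_le: "eventually (\<lambda>n. k n \<le> n) sequentially"
    using ev_kl by eventually_elim (metis l_pos le_trans mult_le_mono2 mult.right_neutral Suc_le_eq
      One_nat_def)
  have c_lim: "c \<longlonglongrightarrow> 0"
    unfolding c_def p_def by (rule block_prob_tendsto_0[OF tail k])
  have ev_small: "eventually (\<lambda>n. c n \<le> 1/2) sequentially"
    using order_tendstoD(2)[OF c_lim, of "1/2"] by (auto elim: eventually_mono)
  have "eventually (\<lambda>n. exp (- (real (card (V n)) * p n) - 2 * c n * (real (card (V n)) * p n))
      - err n - real (k n * l n) * p n \<le> F (V n) (u n)
      \<and> F (V n) (u n) \<le> exp (- ((real (card (V n)) - real (k n * l n)) * p n)) + err n) sequentially"
    using ev_k_pos ev_kl ev_small
  proof eventually_elim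
    case (elim n)
    have "l n \<le> n div k n" using elim(1,2) by (simp add: less_eq_div_iff_mult_less_eq mult.commute)
    then have "l n \<le> n div k n + 1" by simp
    from jointF_two_sided_bound[OF fin card_V elim(1) mix this elim(3)[unfolded c_def p_def]]
    show ?case unfolding err_def c_def p_def by simp
  qed
  then have lower: "eventually (\<lambda>n. exp (- (real (card (V n)) * p n) - 2 * c n * (real (card (V n)) * p n))
      - err n - real (k n * l n) * p n \<le> F (V n) (u n)) sequentially"
    and upper: "eventually (\<lambda>n. F (V n) (u n)
      \<le> exp (- ((real (card (V n)) - real (k n * l n)) * p n)) + err n) sequentially"
    by (auto elim: eventually_mono)
  have err: "err \<longlonglongrightarrow> 0"
    unfolding err_def block_error_def
    using leadbetter_error_tendsto_0[OF tail k ev_k_le \<alpha>_small mixing_bound_nonneg[OF mix] pairs] .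
  have Vp: "(\<lambda>n. real (card (V n)) * p n) \<longlonglongrightarrow> r * \<tau>"
    unfolding p_def by (rule tendsto_div_real_mult[OF ratio tail])
  have klp: "(\<lambda>n. real (k n * l n) * p n) \<longlonglongrightarrow> 0"
    using tendsto_div_real_mult[OF kl tail] unfolding p_def by simp
  show ?thesis
    using lower upper tendsto_block_bounds(2,1)[OF Vp klp err c_lim] by (rule tendsto_sandwich)
qed

end

section \<open>An ergodic theorem for the shift on sequences\<close>

definition seq_space :: "(nat \<Rightarrow> 'a) measure" where
  "seq_space = Pi\<^sub>M UNIV (\<lambda>_. count_space UNIV)"

definition shift_seq :: "nat \<Rightarrow> (nat \<Rightarrow> 'a) \<Rightarrow> nat \<Rightarrow> 'a" where
  "shift_seq n f = (\<lambda>i. f (n + i))"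

lemma space_seq_space: "space seq_space = UNIV"
  unfolding seq_space_def by (simp add: space_PiM PiE_UNIV_domain)

lemma measurable_seq_component [measurable]: "(\<lambda>f. f i) \<in> seq_space \<rightarrow>\<^sub>M count_space UNIV"
  unfolding seq_space_def by (rule measurable_component_singleton) simp

lemma measurable_shift_seq [measurable]: "shift_seq n \<in> seq_space \<rightarrow>\<^sub>M seq_space"
  unfolding shift_seq_def seq_space_def
  by (rule measurable_PiM_single') (auto intro: measurable_component_singleton)

lemma shift_seq_0 [simp]: "shift_seq 0 f = f"
  unfolding shift_seq_def by simp

lemma shift_seq_shift_seq [simp]: "shift_seq m (shift_seq n f) = shift_seq (n + m) f"
  unfolding shift_seq_def by (simp add: add.assoc)

definition birkhoff_sum :: "((nat \<Rightarrow> 'a) \<Rightarrow> real) \<Rightarrow> nat \<Rightarrow> (nat \<Rightarrow> 'a) \<Rightarrow> real" where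
  "birkhoff_sum g n f = (\<Sum>k<n. g (shift_seq k f))"

definition often_below :: "((nat \<Rightarrow> 'a) \<Rightarrow> real) \<Rightarrow> real \<Rightarrow> (nat \<Rightarrow> 'a) \<Rightarrow> bool" where
  "often_below g s f \<longleftrightarrow> (\<forall>M. \<exists>n\<ge>M. 0 < n \<and> birkhoff_sum g n f < s * real n)"

text \<open>
  Unlike \<open>{f. often_below g t f}\<close>, this set is exactly invariant under the shift, since one step
  changes a Birkhoff sum by at most \<open>1\<close> for \<open>0 \<le> g \<le> 1\<close>.
\<close>
definition often_below_less :: "((nat \<Rightarrow> 'a) \<Rightarrow> real) \<Rightarrow> real \<Rightarrow> (nat \<Rightarrow> 'a) set" where
  "often_below_less g t = {f. \<exists>j::nat. often_below g (t - 1 / real (Suc j)) f}"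

definition window_below :: "((nat \<Rightarrow> 'a) \<Rightarrow> real) \<Rightarrow> real \<Rightarrow> nat \<Rightarrow> (nat \<Rightarrow> 'a) set" where
  "window_below g t N = {f. \<exists>n\<in>{1..N}. birkhoff_sum g n f < t * real n}"

lemma borel_measurable_birkhoff_sum [measurable]:
  "g \<in> borel_measurable seq_space \<Longrightarrow> birkhoff_sum g n \<in> borel_measurable seq_space"
  unfolding birkhoff_sum_def
  by (intro borel_measurable_sum) (rule measurable_compose[OF measurable_shift_seq], assumption)

lemma often_below_sets [measurable]:
  assumes [measurable]: "g \<in> borel_measurable seq_space"
  shows "{f. often_below g s f} \<in> sets seq_space"
proof -
  have "{f. often_below g s f}
      = {f\<in>space seq_space. \<forall>M. \<exists>n\<ge>M. 0 < n \<and> birkhoff_sum g n f < s * real n}"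
    unfolding often_below_def space_seq_space by simp
  also have "\<dots> \<in> sets seq_space" by measurable
  finally show ?thesis .
qed

lemma often_below_less_sets [measurable]:
  assumes [measurable]: "g \<in> borel_measurable seq_space"
  shows "often_below_less g t \<in> sets seq_space"
proof -
  have "often_below_less g t = (\<Union>j. {f. often_below g (t - 1 / real (Suc j)) f})"
    unfolding often_below_less_def by auto
  also have "\<dots> \<in> sets seq_space" by measurable
  finally show ?thesis .
qed

lemma window_below_sets [measurable]:
  assumes [measurable]: "g \<in> borel_measurable seq_space"
  shows "window_below g t N \<in> sets seq_space"
proof -
  have "window_below g t N = {f \<in> space seq_space. \<exists>n\<in>{1..N}. birkhoff_sum g n f < t * real n}"
    unfolding window_below_def space_seq_space by simp
  also have "\<dots> \<in> sets seq_space" by measurable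
  finally show ?thesis .
qed

lemma often_below_less_empty:
  assumes "\<And>f. 0 \<le> g f" and "t \<le> 0"
  shows "often_below_less g t = {}"
proof -
  have "\<not> often_below g (t - 1 / real (Suc j)) f" for j f
  proof
    assume "often_below g (t - 1 / real (Suc j)) f"
    then obtain n where n: "birkhoff_sum g n f < (t - 1 / real (Suc j)) * real n"
      unfolding often_below_def by blast
    have "0 \<le> 1 / real (Suc j)" by simp
    then have "t - 1 / real (Suc j) \<le> 0" using assms(2) by linarith
    then have "(t - 1 / real (Suc j)) * real n \<le> 0" by (simp add: mult_nonpos_nonneg)
    moreover have "0 \<le> birkhoff_sum g n f" unfolding birkhoff_sum_def using assms(1) by (simp add: sum_nonneg)
    ultimately show False using n by linarith
  qed
  then show ?thesis unfolding often_below_less_def by blast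
qed

lemma often_below_less_subset_window_below: "often_below_less g t \<subseteq> (\<Union>N. window_below g t N)"
proof
  fix f assume "f \<in> often_below_less g t"
  then obtain j where "often_below g (t - 1 / real (Suc j)) f" unfolding often_below_less_def by blast
  then obtain n where n: "1 \<le> n" "birkhoff_sum g n f < (t - 1 / real (Suc j)) * real n"
    unfolding often_below_def by (auto simp: Suc_le_eq)
  moreover have "(t - 1 / real (Suc j)) * real n \<le> t * real n" by (simp add: mult_right_mono)
  ultimately have "birkhoff_sum g n f < t * real n" by linarith
  then have "f \<in> window_below g t n"
    unfolding window_below_def using n(1) by (intro CollectI bexI[of _ n]) auto
  then show "f \<in> (\<Union>N. window_below g t N)" by blast
qed

lemma birkhoff_sum_Suc: "birkhoff_sum g (Suc n) f = g f + birkhoff_sum g n (shift_seq 1 f)"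
  unfolding birkhoff_sum_def by (simp only: sum.lessThan_Suc_shift shift_seq_shift_seq shift_seq_0 plus_1_eq_Suc)

lemma birkhoff_sum_bounds:
  assumes "\<And>f. 0 \<le> g f \<and> g f \<le> 1"
  shows "0 \<le> birkhoff_sum g n f" and "birkhoff_sum g n f \<le> real n"
proof -
  show "0 \<le> birkhoff_sum g n f" unfolding birkhoff_sum_def using assms by (simp add: sum_nonneg)
  have "birkhoff_sum g n f \<le> (\<Sum>k<n. 1)" unfolding birkhoff_sum_def using assms by (intro sum_mono) auto
  then show "birkhoff_sum g n f \<le> real n" by simp
qed

lemma often_below_mono: "often_below g s f \<Longrightarrow> s \<le> s' \<Longrightarrow> often_below g s' f"
  unfolding often_below_def by (meson less_le_trans mult_right_mono of_nat_0_le_iff)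

lemma often_below_if_often_below_shift:
  assumes g01: "\<And>f. 0 \<le> g f \<and> g f \<le> 1" and below: "often_below g s (shift_seq 1 f)" and ss: "s < s'"
  shows "often_below g s' f"
  unfolding often_below_def
proof
  fix M
  obtain N0 :: nat where N0: "1 - s' < real N0 * (s' - s)"
    using ex_less_of_nat_mult[of "s' - s" "1 - s'"] ss by auto
  obtain n where n: "n \<ge> max M N0" "0 < n" "birkhoff_sum g n (shift_seq 1 f) < s * real n"
    using below unfolding often_below_def by blast
  have "birkhoff_sum g (Suc n) f = g f + birkhoff_sum g n (shift_seq 1 f)" by (rule birkhoff_sum_Suc)
  also have "\<dots> < 1 + s * real n" using n(3) g01[of f] by linarith
  also have "\<dots> \<le> s' * real (Suc n)"
  proof -
    have "real N0 * (s' - s) \<le> real n * (s' - s)" using n(1) ss by (intro mult_right_mono) auto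
    then show ?thesis using N0 by (simp add: algebra_simps)
  qed
  finally show "\<exists>n\<ge>M. 0 < n \<and> birkhoff_sum g n f < s' * real n" using n(1) by (intro exI[of _ "Suc n"]) auto
qed

lemma often_below_shift_if_often_below:
  assumes g01: "\<And>f. 0 \<le> g f \<and> g f \<le> 1" and below: "often_below g s f" and ss: "s < s'"
  shows "often_below g s' (shift_seq 1 f)"
  unfolding often_below_def
proof
  fix M
  obtain N0 :: nat where N0: "s < real N0 * (s' - s)"
    using ex_less_of_nat_mult[of "s' - s" "s"] ss by auto
  obtain m where m: "m \<ge> max (M + 2) (N0 + 2)" "0 < m" "birkhoff_sum g m f < s * real m"
    using below unfolding often_below_def by blast
  obtain n where mn: "m = Suc n" using m(2) gr0_implies_Suc by blast
  have "birkhoff_sum g n (shift_seq 1 f) = birkhoff_sum g (Suc n) f - g f" using birkhoff_sum_Suc[of g n f] by simp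
  also have "\<dots> \<le> birkhoff_sum g (Suc n) f" using g01[of f] by simp
  also have "\<dots> < s * real (Suc n)" using m(3) mn by simp
  also have "\<dots> \<le> s' * real n"
  proof -
    have "real N0 * (s' - s) \<le> real n * (s' - s)" using m(1) mn ss by (intro mult_right_mono) auto
    then show ?thesis using N0 by (simp add: algebra_simps)
  qed
  finally show "\<exists>n\<ge>M. 0 < n \<and> birkhoff_sum g n (shift_seq 1 f) < s' * real n"
    using m(1) mn by (intro exI[of _ n]) auto
qed

lemma often_below_less_shift_seq_1:
  assumes g01: "\<And>f. 0 \<le> g f \<and> g f \<le> 1"
  shows "shift_seq 1 f \<in> often_below_less g t \<longleftrightarrow> f \<in> often_below_less g t"
proof
  have lt: "t - 1 / real (Suc j) < t - 1 / real (Suc (2 * j + 1))" for j :: nat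
    by (simp add: frac_less2)
  show "shift_seq 1 f \<in> often_below_less g t \<Longrightarrow> f \<in> often_below_less g t"
  proof -
    assume "shift_seq 1 f \<in> often_below_less g t"
    then obtain j where "often_below g (t - 1 / real (Suc j)) (shift_seq 1 f)" unfolding often_below_less_def by blast
    then have "often_below g (t - 1 / real (Suc (2 * j + 1))) f" using often_below_if_often_below_shift[where g=g, OF g01 _ lt] by blast
    then show "f \<in> often_below_less g t" unfolding often_below_less_def by blast
  qed
  show "f \<in> often_below_less g t \<Longrightarrow> shift_seq 1 f \<in> often_below_less g t"
  proof -
    assume "f \<in> often_below_less g t"
    then obtain j where "often_below g (t - 1 / real (Suc j)) f" unfolding often_below_less_def by blast
    then have "often_below g (t - 1 / real (Suc (2 * j + 1))) (shift_seq 1 f)" using often_below_shift_if_often_below[where g=g, OF g01 _ lt] by blast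
    then show "shift_seq 1 f \<in> often_below_less g t" unfolding often_below_less_def by blast
  qed
qed

lemma shift_seq_vimage_often_below_less:
  assumes g01: "\<And>f. 0 \<le> g f \<and> g f \<le> 1"
  shows "shift_seq m -` often_below_less g t = often_below_less g t"
proof (induction m)
  case 0 then show ?case by (simp add: vimage_def)
next
  case (Suc m)
  have "f \<in> shift_seq (Suc m) -` often_below_less g t \<longleftrightarrow> f \<in> often_below_less g t" for f
  proof -
    have "shift_seq (Suc m) f = shift_seq 1 (shift_seq m f)" by simp
    then have "f \<in> shift_seq (Suc m) -` often_below_less g t \<longleftrightarrow> shift_seq m f \<in> often_below_less g t" using often_below_less_shift_seq_1[where g=g and f="shift_seq m f" and t=t, OF g01] by simp
    also have "\<dots> \<longleftrightarrow> f \<in> often_below_less g t" using Suc.IH by blast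
    finally show ?thesis .
  qed
  then show ?case by blast
qed

lemma sum_le_by_windows:
  fixes z \<beta> :: "nat \<Rightarrow> real" and t :: real and N :: nat
  assumes z01: "\<And>k. 0 \<le> z k \<and> z k \<le> 1" and t0: "0 \<le> t"
    and b0: "\<And>k. 0 \<le> \<beta> k"
    and good: "\<And>k. \<beta> k < 1 \<Longrightarrow> \<exists>n\<in>{1..N}. (\<Sum>i\<in>{k..<k+n}. z i) < t * real n"
  shows "(\<Sum>k\<in>{a..<a+L}. z k) \<le> t * real L + (\<Sum>k\<in>{a..<a+L}. \<beta> k) + real N"
proof (induction L arbitrary: a rule: less_induct)
  case (less L)
  show ?case
  proof (cases "L = 0")
    case True then show ?thesis by simp
  next
    case L0: False
    show ?thesis
    proof (cases "\<beta> a < 1")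
      case False
      obtain L' where LL: "L = Suc L'" using L0 not0_implies_Suc by blast
      have IH: "(\<Sum>k\<in>{Suc a..<Suc a+L'}. z k) \<le> t * real L' + (\<Sum>k\<in>{Suc a..<Suc a+L'}. \<beta> k) + real N"
        using less.IH[of L' "Suc a"] LL by simp
      have s1: "(\<Sum>k\<in>{a..<a+L}. z k) = z a + (\<Sum>k\<in>{Suc a..<Suc a+L'}. z k)"
        unfolding LL by (simp add: sum.atLeast_Suc_lessThan)
      have s2: "(\<Sum>k\<in>{a..<a+L}. \<beta> k) = \<beta> a + (\<Sum>k\<in>{Suc a..<Suc a+L'}. \<beta> k)"
        unfolding LL by (simp add: sum.atLeast_Suc_lessThan)
      have "z a \<le> \<beta> a" using False z01[of a] by linarith
      moreover have "t * real L' \<le> t * real L" using t0 LL by (intro mult_left_mono) auto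
      ultimately show ?thesis unfolding s1 s2 using IH by linarith
    next
      case True
      obtain n where n: "n \<in> {1..N}" "(\<Sum>i\<in>{a..<a+n}. z i) < t * real n" using good[OF True] by blast
      show ?thesis
      proof (cases "n \<le> L")
        case True
        have IH: "(\<Sum>k\<in>{a+n..<(a+n)+(L-n)}. z k) \<le> t * real (L-n) + (\<Sum>k\<in>{a+n..<(a+n)+(L-n)}. \<beta> k) + real N"
          using less.IH[of "L - n" "a + n"] n(1) L0 True by auto
        have e: "(a+n)+(L-n) = a + L" using True by simp
        have s1: "(\<Sum>k\<in>{a..<a+L}. z k) = (\<Sum>k\<in>{a..<a+n}. z k) + (\<Sum>k\<in>{a+n..<a+L}. z k)"
          using True by (simp add: sum.atLeastLessThan_concat)
        have s2: "(\<Sum>k\<in>{a..<a+L}. \<beta> k) = (\<Sum>k\<in>{a..<a+n}. \<beta> k) + (\<Sum>k\<in>{a+n..<a+L}. \<beta> k)"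
          using True by (simp add: sum.atLeastLessThan_concat)
        have b1: "0 \<le> (\<Sum>k\<in>{a..<a+n}. \<beta> k)" using b0 by (simp add: sum_nonneg)
        have tt: "t * real n + t * real (L - n) = t * real L" using True by (simp add: algebra_simps of_nat_diff)
        show ?thesis unfolding s1 s2 using IH[unfolded e] n(2) b1 tt by linarith
      next
        case False
        have "(\<Sum>k\<in>{a..<a+L}. z k) \<le> (\<Sum>k\<in>{a..<a+L}. 1)" using z01 by (intro sum_mono) auto
        also have "\<dots> = real L" by simp
        also have "\<dots> \<le> real N" using False n(1) by simp
        finally have "(\<Sum>k\<in>{a..<a+L}. z k) \<le> real N" .
        moreover have "0 \<le> t * real L" using t0 by simp
        moreover have "0 \<le> (\<Sum>k\<in>{a..<a+L}. \<beta> k)" using b0 by (simp add: sum_nonneg)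
        ultimately show ?thesis by linarith
      qed
    qed
  qed
qed

lemma birkhoff_average_tendsto_if_not_often_below:
  assumes below_g: "\<forall>j. \<not> often_below g (c - 1 / real (Suc j)) f"
    and below_h: "\<forall>j. \<not> often_below (\<lambda>f. 1 - g f) (1 - c - 1 / real (Suc j)) f"
  shows "(\<lambda>n. birkhoff_sum g n f / real n) \<longlonglongrightarrow> c"
proof (rule LIMSEQ_I)
  fix r :: real assume "0 < r"
  then obtain j where j: "1 / real (Suc j) < r"
    using reals_Archimedean[of r] by (auto simp: inverse_eq_divide)
  obtain M1 where M1: "\<forall>n\<ge>M1. 0 < n \<longrightarrow> \<not> birkhoff_sum g n f < (c - 1 / real (Suc j)) * real n"
    using below_g unfolding often_below_def by blast
  obtain M2 where M2: "\<forall>n\<ge>M2. 0 < n \<longrightarrow>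
      \<not> birkhoff_sum (\<lambda>f. 1 - g f) n f < (1 - c - 1 / real (Suc j)) * real n"
    using below_h unfolding often_below_def by blast
  have "norm (birkhoff_sum g n f / real n - c) < r" if n: "M1 + M2 + 1 \<le> n" for n
  proof -
    have n_pos: "0 < real n" using n by simp
    have "birkhoff_sum (\<lambda>f. 1 - g f) n f = real n - birkhoff_sum g n f"
      unfolding birkhoff_sum_def by (simp add: sum_subtractf)
    then have "(c - 1 / real (Suc j)) * real n \<le> birkhoff_sum g n f"
      and "birkhoff_sum g n f \<le> (c + 1 / real (Suc j)) * real n"
      using M1[rule_format, of n] M2[rule_format, of n] n by (auto simp: algebra_simps not_less)
    then have "c - 1 / real (Suc j) \<le> birkhoff_sum g n f / real n"
      and "birkhoff_sum g n f / real n \<le> c + 1 / real (Suc j)"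
      using n_pos by (simp_all add: pos_le_divide_eq pos_divide_le_eq)
    then show ?thesis using j by (simp add: abs_less_iff)
  qed
  then show "\<exists>no. \<forall>n\<ge>no. norm (birkhoff_sum g n f / real n - c) < r" by blast
qed

locale ergodic_shift = prob_space P for P :: "(nat \<Rightarrow> 'a) measure" +
  assumes sets_P: "sets P = sets seq_space"
    and shift_invariant: "\<And>n. distr P seq_space (shift_seq n) = P"
    and ergodic: "\<And>E. E \<in> sets seq_space \<Longrightarrow> (\<And>m. shift_seq m -` E = E) \<Longrightarrow> prob E = 0 \<or> prob E = 1"
begin

lemma space_P: "space P = UNIV"
  using sets_eq_imp_space_eq[OF sets_P] space_seq_space by simp

lemma measurable_P: "f \<in> seq_space \<rightarrow>\<^sub>M M' \<Longrightarrow> f \<in> P \<rightarrow>\<^sub>M M'"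
  by (simp add: measurable_cong_sets[OF sets_P refl])

lemma events_P: "A \<in> sets seq_space \<Longrightarrow> A \<in> events"
  using sets_P by simp

lemma integrable_bounded:
  fixes g :: "(nat \<Rightarrow> 'a) \<Rightarrow> real"
  assumes "g \<in> borel_measurable seq_space" and "\<And>f. \<bar>g f\<bar> \<le> B"
  shows "integrable P g"
  by (rule integrable_const_bound[where B = B]) (use assms measurable_P in auto)

lemma integral_birkhoff_sum:
  fixes g :: "(nat \<Rightarrow> 'a) \<Rightarrow> real"
  assumes g: "g \<in> borel_measurable seq_space" and bounded: "\<And>f. \<bar>g f\<bar> \<le> B"
  shows "(\<integral>f. birkhoff_sum g L f \<partial>P) = real L * (\<integral>f. g f \<partial>P)"
proof -
  have shift: "(\<integral>f. g (shift_seq k f) \<partial>P) = (\<integral>f. g f \<partial>P)" for k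
  proof -
    have "(\<integral>f. g f \<partial>(distr P seq_space (shift_seq k))) = (\<integral>f. g (shift_seq k f) \<partial>P)"
      by (rule integral_distr[OF measurable_P[OF measurable_shift_seq] g])
    then show ?thesis using shift_invariant[of k] by simp
  qed
  have "integrable P (\<lambda>f. g (shift_seq k f))" for k
    by (rule integrable_bounded[where B = B]) (use g bounded in auto)
  then have "(\<integral>f. birkhoff_sum g L f \<partial>P) = (\<Sum>k<L. \<integral>f. g (shift_seq k f) \<partial>P)"
    unfolding birkhoff_sum_def by (intro Bochner_Integration.integral_sum) auto
  then show ?thesis by (simp add: shift)
qed

text \<open>
  Cut the orbit into windows of length at most \<open>N\<close> on which the Birkhoff average of \<open>g\<close> is below
  \<open>t\<close>, starting a new window wherever one exists; the remaining steps are the visits to the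
  complement of \<open>window_below g t N\<close>.
\<close>
lemma integral_le_window_bound:
  assumes g: "g \<in> borel_measurable seq_space" and g01: "\<And>f. 0 \<le> g f \<and> g f \<le> 1" and t: "0 \<le> t"
  shows "real L * (\<integral>f. g f \<partial>P) \<le> t * real L + real L * prob (UNIV - window_below g t N) + real N"
proof -
  define Bad where "Bad = UNIV - window_below g t N"
  have Bad_sets [measurable]: "Bad \<in> sets seq_space"
    unfolding Bad_def using window_below_sets[OF g, of t N] space_seq_space by (metis sets.compl_sets)
  have pointwise: "birkhoff_sum g L f \<le> t * real L + birkhoff_sum (indicator Bad) L f + real N" for f
  proof -
    have "(\<Sum>k\<in>{0..<0+L}. g (shift_seq k f))
        \<le> t * real L + (\<Sum>k\<in>{0..<0+L}. indicator Bad (shift_seq k f)) + real N"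
    proof (rule sum_le_by_windows)
      fix k assume "(indicator Bad (shift_seq k f) :: real) < 1"
      then obtain n where n: "n \<in> {1..N}" "birkhoff_sum g n (shift_seq k f) < t * real n"
        unfolding Bad_def window_below_def by (auto simp: indicator_def split: if_splits)
      moreover have "(\<Sum>i\<in>{k..<k+n}. g (shift_seq i f)) = birkhoff_sum g n (shift_seq k f)"
        unfolding birkhoff_sum_def by (induction n) (simp_all add: add.commute)
      ultimately show "\<exists>n\<in>{1..N}. (\<Sum>i\<in>{k..<k+n}. g (shift_seq i f)) < t * real n"
        by (intro bexI[of _ n]) auto
    qed (use g01 t in auto)
    then show ?thesis unfolding birkhoff_sum_def by (simp add: atLeast0LessThan)
  qed
  have bounded: "\<bar>birkhoff_sum k L f\<bar> \<le> real L" if "\<And>f. 0 \<le> k f \<and> k f \<le> 1" for k f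
    using birkhoff_sum_bounds[OF that, where n = L and f = f] by simp
  have int_g: "integrable P (birkhoff_sum g L)"
    by (rule integrable_bounded[where B = "real L"]) (use g bounded[OF g01] in simp_all)
  have int_Bad: "integrable P (birkhoff_sum (indicator Bad) L)"
    by (rule integrable_bounded[where B = "real L"]) (measurable, simp add: bounded)
  have "(\<integral>f. birkhoff_sum g L f \<partial>P) \<le> (\<integral>f. t * real L + birkhoff_sum (indicator Bad) L f + real N \<partial>P)"
    by (rule integral_mono) (use pointwise int_g int_Bad in auto)
  also have "\<dots> = t * real L + real L * prob Bad + real N"
    using int_Bad integral_birkhoff_sum[of "indicator Bad" 1 L] events_P[OF Bad_sets]
    by (simp add: prob_space)
  finally show ?thesis
    using integral_birkhoff_sum[OF g, of 1 L] g01 unfolding Bad_def by (simp add: abs_le_iff)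
qed

lemma prob_often_below_less_eq_0:
  assumes g: "g \<in> borel_measurable seq_space" and g01: "\<And>f. 0 \<le> g f \<and> g f \<le> 1"
    and t: "t < (\<integral>f. g f \<partial>P)"
  shows "prob (often_below_less g t) = 0"
proof (rule ccontr)
  assume "prob (often_below_less g t) \<noteq> 0"
  then have full: "prob (often_below_less g t) = 1"
    using ergodic[OF often_below_less_sets[OF g] shift_seq_vimage_often_below_less[OF g01]] by blast
  have t_pos: "0 < t"
  proof (rule ccontr)
    assume "\<not> 0 < t"
    then have "often_below_less g t = {}" using g01 by (intro often_below_less_empty) auto
    then show False using full by simp
  qed
  define \<delta> where "\<delta> = ((\<integral>f. g f \<partial>P) - t) / 3"
  have \<delta>_pos: "0 < \<delta>" using t unfolding \<delta>_def by simp
  have "(\<Union>N. window_below g t N) \<in> events" using g by (intro events_P) measurable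
  from finite_measure_mono[OF often_below_less_subset_window_below this]
  have "1 \<le> prob (\<Union>N. window_below g t N)" using full by simp
  moreover have "(\<lambda>N. prob (window_below g t N)) \<longlonglongrightarrow> prob (\<Union>N. window_below g t N)"
    using window_below_sets[OF g] events_P
    by (intro finite_Lim_measure_incseq) (auto simp: incseq_def window_below_def)
  ultimately have "eventually (\<lambda>N. 1 - \<delta> < prob (window_below g t N)) sequentially"
    using \<delta>_pos by (intro order_tendstoD(1)) auto
  then obtain N where "1 - \<delta> < prob (window_below g t N)"
    by (auto simp: eventually_sequentially)
  then have bad_small: "prob (UNIV - window_below g t N) < \<delta>"
    using prob_compl[OF events_P[OF window_below_sets[OF g]]] space_P by simp
  obtain L :: nat where L: "real N < real L * \<delta>"
    using ex_less_of_nat_mult[OF \<delta>_pos] by blast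
  then have L_pos: "0 < real L" using \<delta>_pos by (cases L) auto
  have "real L * prob (UNIV - window_below g t N) \<le> real L * \<delta>"
    using bad_small L_pos by (intro mult_left_mono) auto
  then have "real L * (\<integral>f. g f \<partial>P) < t * real L + 2 * (real L * \<delta>)"
    using integral_le_window_bound[OF g g01, of t L N] t_pos L by linarith
  then have "real L * (\<integral>f. g f \<partial>P) < real L * (t + 2 * \<delta>)" by (simp add: algebra_simps)
  then have "(\<integral>f. g f \<partial>P) < t + 2 * \<delta>" using L_pos by simp
  then show False using t unfolding \<delta>_def by (simp add: field_simps)
qed

lemma prob_often_below_eq_0:
  assumes g: "g \<in> borel_measurable seq_space" and g01: "\<And>f. 0 \<le> g f \<and> g f \<le> 1"
    and s: "s < (\<integral>f. g f \<partial>P)"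
  shows "prob {f. often_below g s f} = 0"
proof -
  define t where "t = (s + (\<integral>f. g f \<partial>P)) / 2"
  have st: "s < t" "t < (\<integral>f. g f \<partial>P)" using s unfolding t_def by auto
  obtain j where "inverse (real (Suc j)) < t - s" using reals_Archimedean[of "t - s"] st by auto
  then have "s \<le> t - 1 / real (Suc j)" by (simp add: inverse_eq_divide)
  then have "{f. often_below g s f} \<subseteq> often_below_less g t"
    unfolding often_below_less_def using often_below_mono by blast
  then have "prob {f. often_below g s f} \<le> prob (often_below_less g t)"
    by (rule finite_measure_mono) (use often_below_less_sets[OF g] sets_P in auto)
  then show ?thesis
    using prob_often_below_less_eq_0[OF g g01 st(2)] measure_nonneg[of P "{f. often_below g s f}"]
    by linarith
qed

theorem birkhoff_average_tendsto:
  assumes g: "g \<in> borel_measurable seq_space" and g01: "\<And>f. 0 \<le> g f \<and> g f \<le> 1"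
  shows "AE f in P. (\<lambda>n. birkhoff_sum g n f / real n) \<longlonglongrightarrow> (\<integral>f. g f \<partial>P)"
proof -
  define c where "c = (\<integral>f. g f \<partial>P)"
  have not_often: "AE f in P. \<forall>j::nat. \<not> often_below k (\<integral>f. k f \<partial>P - 1 / real (Suc j)) f"
    if "k \<in> borel_measurable seq_space" "\<And>f. 0 \<le> k f \<and> k f \<le> 1" for k
  proof (subst AE_all_countable, intro allI)
    fix j
    have "prob {f. often_below k (\<integral>f. k f \<partial>P - 1 / real (Suc j)) f} = 0"
      by (rule prob_often_below_eq_0[OF that]) simp
    then show "AE f in P. \<not> often_below k (\<integral>f. k f \<partial>P - 1 / real (Suc j)) f"
      using prob_eq_0[OF events_P[OF often_below_sets[OF that(1)]]] by simp
  qed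
  have "integrable P g"
    by (rule integrable_bounded[where B = 1]) (use g g01 in \<open>auto simp: abs_le_iff\<close>)
  then have "(\<integral>f. 1 - g f \<partial>P) = 1 - c"
    unfolding c_def by (simp add: prob_space)
  moreover have "(\<lambda>f. 1 - g f) \<in> borel_measurable seq_space" using g by measurable
  ultimately have "AE f in P. \<forall>j::nat. \<not> often_below (\<lambda>f. 1 - g f) (1 - c - 1 / real (Suc j)) f"
    using not_often[of "\<lambda>f. 1 - g f"] g01 by simp
  moreover have "AE f in P. \<forall>j::nat. \<not> often_below g (c - 1 / real (Suc j)) f"
    using not_often[OF g g01] unfolding c_def .
  ultimately show ?thesis unfolding c_def[symmetric]
    by eventually_elim (rule birkhoff_average_tendsto_if_not_often_below)
qed

lemma birkhoff_average_indicator_tendsto: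
  assumes "A \<in> sets seq_space"
  shows "AE f in P. (\<lambda>n. birkhoff_sum (indicator A) n f / real n) \<longlonglongrightarrow> prob A"
  using birkhoff_average_tendsto[of "indicator A"] assms events_P[OF assms] by simp

end

section \<open>I.i.d. sequences have an ergodic shift\<close>

locale iid_seq = prob_space M for M :: "'a measure" +
  fixes X :: "nat \<Rightarrow> 'a \<Rightarrow> 'c"
  assumes measurable_X [measurable]: "\<And>k. X k \<in> measurable M (count_space UNIV)"
    and indep_X: "indep_vars (\<lambda>_. count_space UNIV) X UNIV"
    and distr_X: "\<And>k. distr M (count_space UNIV) (X k) = distr M (count_space UNIV) (X 0)"
begin

abbreviation increments :: "nat \<Rightarrow> 'a \<Rightarrow> nat \<Rightarrow> 'c" where
  "increments n \<omega> \<equiv> \<lambda>i. X (n + i) \<omega>"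

lemma measurable_increments [measurable]: "increments n \<in> M \<rightarrow>\<^sub>M seq_space"
  unfolding seq_space_def by (rule measurable_PiM_single') auto

lemma prob_cylinder_increments:
  assumes "finite J" "J \<noteq> {}"
  shows "prob (increments n -` prod_emb UNIV (\<lambda>_. count_space UNIV) J (Pi\<^sub>E J A) \<inter> space M)
        = (\<Prod>j\<in>J. prob (X 0 -` A j \<inter> space M))"
proof -
  have identical: "prob (X k -` B \<inter> space M) = prob (X 0 -` B \<inter> space M)" for k B
    using arg_cong[OF distr_X[of k], of "\<lambda>D. measure D B"] by (simp add: measure_distr)
  have "increments n -` prod_emb UNIV (\<lambda>_. count_space UNIV) J (Pi\<^sub>E J A) \<inter> space M
      = (\<Inter>i\<in>(\<lambda>j. n + j) ` J. X i -` A (i - n) \<inter> space M)"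
    using assms(2) by (auto simp: prod_emb_def PiE_iff space_PiM)
  also have "prob \<dots> = (\<Prod>i\<in>(\<lambda>j. n + j) ` J. prob (X i -` A (i - n) \<inter> space M))"
    by (rule indep_varsD[OF indep_X]) (use assms in auto)
  also have "\<dots> = (\<Prod>j\<in>J. prob (X (n + j) -` A j \<inter> space M))"
    by (subst prod.reindex) (auto simp: inj_on_def)
  also have "\<dots> = (\<Prod>j\<in>J. prob (X 0 -` A j \<inter> space M))"
    by (rule prod.cong[OF refl identical])
  finally show ?thesis .
qed

lemma distr_increments: "distr M seq_space (increments n) = distr M seq_space (increments 0)"
  unfolding seq_space_def
proof (rule measure_eqI_PiM_infinite)
  show "finite_measure (distr M (Pi\<^sub>M UNIV (\<lambda>_. count_space UNIV)) (increments n))"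
    using prob_space_distr[OF measurable_increments[of n]] unfolding seq_space_def
    by (simp add: prob_space_def)
  fix A :: "nat \<Rightarrow> 'c set" and J :: "nat set"
  assume J: "finite J" "J \<subseteq> UNIV" "\<And>i. i \<in> J \<Longrightarrow> A i \<in> sets (count_space UNIV)"
  let ?C = "prod_emb UNIV (\<lambda>_. count_space UNIV) J (Pi\<^sub>E J A)"
  have "?C \<in> sets (Pi\<^sub>M UNIV (\<lambda>_. count_space UNIV))" by (rule sets_PiM_I) (use J in auto)
  moreover have "prob (increments n -` ?C \<inter> space M) = prob (increments 0 -` ?C \<inter> space M)"
  proof (cases "J = {}")
    case True
    then show ?thesis by (simp add: prod_emb_def space_PiM vimage_def restrict_def)
  next
    case False
    show ?thesis
      using prob_cylinder_increments[OF J(1) False, of n A] prob_cylinder_increments[OF J(1) False, of 0 A]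
      by simp
  qed
  ultimately show "emeasure (distr M (Pi\<^sub>M UNIV (\<lambda>_. count_space UNIV)) (increments n)) ?C =
      emeasure (distr M (Pi\<^sub>M UNIV (\<lambda>_. count_space UNIV)) (increments 0)) ?C"
    using measurable_increments[of n] measurable_increments[of 0] unfolding seq_space_def
    by (simp add: emeasure_distr emeasure_eq_measure)
qed simp_all

definition past_free :: "nat \<Rightarrow> 'a set set" where
  "past_free i = sigma_sets (space M) {X i -` B \<inter> space M | B. B \<in> sets (count_space UNIV)}"

lemma past_free_subset: "past_free i \<subseteq> Pow (space M)"
proof
  fix x assume "x \<in> past_free i"
  moreover have "{X i -` B \<inter> space M | B. B \<in> sets (count_space UNIV)} \<subseteq> Pow (space M)" by auto
  ultimately have "x \<subseteq> space M" unfolding past_free_def by (rule sigma_sets_into_sp[rotated])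
  then show "x \<in> Pow (space M)" by simp
qed

lemma increments_measurable_tail:
  "increments n \<in> measurable (sigma (space M) (\<Union>(past_free ` {n..}))) seq_space"
proof -
  let ?G = "\<Union>(past_free ` {n..})"
  have G_Pow: "?G \<subseteq> Pow (space M)" using past_free_subset by blast
  have "(\<lambda>\<omega>. X (n + i) \<omega>) \<in> measurable (sigma (space M) ?G) (count_space UNIV)" for i
  proof (rule measurableI)
    fix B :: "'c set"
    have "X (n + i) -` B \<inter> space M \<in> past_free (n + i)"
      unfolding past_free_def by (rule sigma_sets.Basic) auto
    then have "X (n + i) -` B \<inter> space M \<in> ?G" by auto
    then show "(\<lambda>\<omega>. X (n + i) \<omega>) -` B \<inter> space (sigma (space M) ?G) \<in> sets (sigma (space M) ?G)"
      using G_Pow by (simp add: space_measure_of sets_measure_of sigma_sets.Basic)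
  qed simp
  then show ?thesis unfolding seq_space_def by (rule measurable_PiM_single') simp
qed

lemma shift_invariant_zero_one:
  assumes E: "E \<in> sets seq_space" and invariant: "\<And>m. shift_seq m -` E = E"
  shows "prob (increments 0 -` E \<inter> space M) = 0 \<or> prob (increments 0 -` E \<inter> space M) = 1"
proof (rule kolmogorov_0_1_law)
  show "sigma_algebra (space M) (past_free i)" for i
    unfolding past_free_def by (rule sigma_algebra_sigma_sets) auto
  show "indep_sets past_free UNIV"
    using indep_X unfolding indep_vars_def past_free_def by (elim conjE)
  show "increments 0 -` E \<inter> space M \<in> tail_events past_free"
    unfolding tail_events_def
  proof (rule InterI, clarify)
    fix n
    let ?G = "\<Union>(past_free ` {n..})"
    have G_Pow: "?G \<subseteq> Pow (space M)" using past_free_subset by blast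
    have "increments n \<omega> \<in> E \<longleftrightarrow> increments 0 \<omega> \<in> E" for \<omega>
    proof -
      have "increments n \<omega> = shift_seq n (increments 0 \<omega>)" by (simp add: shift_seq_def)
      then have "increments n \<omega> \<in> E \<longleftrightarrow> increments 0 \<omega> \<in> shift_seq n -` E" by simp
      then show ?thesis using invariant[of n] by simp
    qed
    then have "increments 0 -` E \<inter> space M = increments n -` E \<inter> space (sigma (space M) ?G)"
      using G_Pow by (auto simp: space_measure_of)
    also have "\<dots> \<in> sets (sigma (space M) ?G)"
      by (rule measurable_sets[OF increments_measurable_tail E])
    finally show "increments 0 -` E \<inter> space M \<in> sigma_sets (space M) ?G"
      using G_Pow by (simp add: sets_measure_of)
  qed
qed

theorem ergodic_shift_increments: "ergodic_shift (distr M seq_space (increments 0))"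
proof (intro ergodic_shift.intro ergodic_shift_axioms.intro)
  show "prob_space (distr M seq_space (increments 0))"
    by (rule prob_space_distr[OF measurable_increments])
  show "distr (distr M seq_space (increments 0)) seq_space (shift_seq n) = distr M seq_space (increments 0)"
    for n
  proof -
    have "shift_seq n \<circ> increments 0 = increments n" by (simp add: shift_seq_def comp_def)
    then show ?thesis
      using distr_distr[OF measurable_shift_seq measurable_increments[of 0]] distr_increments[of n]
      by simp
  qed
  show "measure (distr M seq_space (increments 0)) E = 0 \<or> measure (distr M seq_space (increments 0)) E = 1"
    if "E \<in> sets seq_space" "\<And>m. shift_seq m -` E = E" for E
    using shift_invariant_zero_one[OF that] measure_distr[OF measurable_increments[of 0] that(1)] by simp
qed simp

end

section \<open>The range of a random walk\<close>

definition partial_sum :: "(nat \<Rightarrow> int) \<Rightarrow> nat \<Rightarrow> int" where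
  "partial_sum x k = (\<Sum>i<k. x i)"

definition no_return :: "(nat \<Rightarrow> int) set" where
  "no_return = {x. \<forall>j\<ge>1. partial_sum x j \<noteq> 0}"

definition no_return_within :: "nat \<Rightarrow> (nat \<Rightarrow> int) set" where
  "no_return_within m = {x. \<forall>j\<in>{1..m}. partial_sum x j \<noteq> 0}"

lemma borel_measurable_int_component [measurable]:
  "(\<lambda>f. real_of_int (f i)) \<in> borel_measurable (seq_space :: (nat \<Rightarrow> int) measure)"
  by (rule measurable_compose[OF measurable_seq_component]) simp

lemma no_return_sets [measurable]: "no_return \<in> sets seq_space"
proof -
  have "no_return = {f\<in>space seq_space. \<forall>j\<ge>1. (\<Sum>i<j. real_of_int (f i)) \<noteq> 0}"
    unfolding no_return_def partial_sum_def space_seq_space by (simp flip: of_int_sum)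
  also have "\<dots> \<in> sets seq_space" by measurable
  finally show ?thesis .
qed

lemma no_return_within_sets [measurable]: "no_return_within m \<in> sets seq_space"
proof -
  have "no_return_within m = {f\<in>space seq_space. \<forall>j\<in>{1..m}. (\<Sum>i<j. real_of_int (f i)) \<noteq> 0}"
    unfolding no_return_within_def partial_sum_def space_seq_space by (simp flip: of_int_sum)
  also have "\<dots> \<in> sets seq_space" by measurable
  finally show ?thesis .
qed

lemma decseq_no_return_within: "decseq no_return_within"
  unfolding decseq_def no_return_within_def by auto

lemma INT_no_return_within: "(\<Inter>m. no_return_within m) = no_return"
  unfolding no_return_def no_return_within_def by (auto intro: atLeastAtMost_iff[THEN iffD2])

lemma partial_sum_shift_seq: "partial_sum (shift_seq k x) j = partial_sum x (k + j) - partial_sum x k"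
  unfolding partial_sum_def by (induction j) (simp_all add: shift_seq_def)

lemma birkhoff_sum_indicator:
  "birkhoff_sum (indicator A) n x = real (card {k\<in>{..<n}. shift_seq k x \<in> A})"
  unfolding birkhoff_sum_def by (simp add: indicator_def sum.If_cases Int_def)

lemma card_filter_atLeastAtMost_le:
  fixes n :: nat
  shows "card {k\<in>{1..n}. P k} \<le> card {k\<in>{..<n}. P k} + 1"
proof -
  have "{k\<in>{1..n}. P k} \<subseteq> insert n {k\<in>{..<n}. P k}" by auto
  then show ?thesis using card_mono[of "insert n {k\<in>{..<n}. P k}"] card_insert_le_m1 by fastforce
qed

lemma card_filter_lessThan_le:
  fixes n :: nat
  shows "card {k\<in>{..<n}. P k} \<le> card {k\<in>{1..n}. P k} + 1"
proof -
  have "{k\<in>{..<n}. P k} \<subseteq> insert 0 {k\<in>{1..n}. P k}" by auto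
  then show ?thesis using card_mono[of "insert 0 {k\<in>{1..n}. P k}"] card_insert_le_m1 by fastforce
qed

text \<open>A time after which the walk never returns to the current site is the last visit to that site.\<close>
lemma card_no_return_le_card_range:
  "card {k\<in>{1..n}. shift_seq k x \<in> no_return} \<le> card (partial_sum x ` {1..n})"
proof -
  let ?K = "{k\<in>{1..n}. shift_seq k x \<in> no_return}"
  have "inj_on (partial_sum x) ?K"
  proof (rule inj_onI, rule ccontr)
    fix k k' assume k: "k \<in> ?K" and k': "k' \<in> ?K" and eq: "partial_sum x k = partial_sum x k'"
      and "k \<noteq> k'"
    then consider "k < k'" | "k' < k" by linarith
    then show False
    proof cases
      case 1
      then have "partial_sum (shift_seq k x) (k' - k) \<noteq> 0" using k unfolding no_return_def by auto
      then show False using eq 1 by (simp add: partial_sum_shift_seq)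
    next
      case 2
      then have "partial_sum (shift_seq k' x) (k - k') \<noteq> 0" using k' unfolding no_return_def by auto
      then show False using eq 2 by (simp add: partial_sum_shift_seq)
    qed
  qed
  then have "card ?K = card (partial_sum x ` ?K)" by (simp add: card_image)
  also have "\<dots> \<le> card (partial_sum x ` {1..n})" by (intro card_mono) auto
  finally show ?thesis .
qed

lemma image_partial_sum_last_visits:
  "partial_sum x ` {1..n}
     \<subseteq> partial_sum x ` {k\<in>{1..n}. \<forall>k'\<in>{k<..n}. partial_sum x k' \<noteq> partial_sum x k}"
proof
  fix s assume "s \<in> partial_sum x ` {1..n}"
  then obtain k where k: "k \<in> {1..n}" "s = partial_sum x k" by blast
  define T where "T = {k'\<in>{1..n}. partial_sum x k' = partial_sum x k}"
  have fin_T: "finite T" and "T \<noteq> {}" unfolding T_def using k by auto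
  then have max_T: "Max T \<in> T" by (rule Max_in)
  have "Max T \<in> {k\<in>{1..n}. \<forall>k'\<in>{k<..n}. partial_sum x k' \<noteq> partial_sum x k}"
  proof (intro CollectI conjI ballI)
    show "Max T \<in> {1..n}" using max_T unfolding T_def by auto
    fix k' assume k': "k' \<in> {Max T<..n}"
    show "partial_sum x k' \<noteq> partial_sum x (Max T)"
    proof
      assume "partial_sum x k' = partial_sum x (Max T)"
      then have "k' \<in> T" using max_T k' unfolding T_def by auto
      then show False using Max_ge[OF fin_T, of k'] k' by auto
    qed
  qed
  moreover have "partial_sum x (Max T) = s" using max_T k unfolding T_def by auto
  ultimately show "s \<in> partial_sum x ` {k\<in>{1..n}. \<forall>k'\<in>{k<..n}. partial_sum x k' \<noteq> partial_sum x k}"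
    by blast
qed

text \<open>A site of the range is counted by its last visit before time \<open>n\<close>; only the last \<open>m\<close> such
  visits can fail to be followed by \<open>m\<close> steps without return.\<close>
lemma card_range_le_card_no_return_within:
  "card (partial_sum x ` {1..n}) \<le> card {k\<in>{1..n}. shift_seq k x \<in> no_return_within m} + m"
proof -
  define last_visits where "last_visits = {k\<in>{1..n}. \<forall>k'\<in>{k<..n}. partial_sum x k' \<noteq> partial_sum x k}"
  have "card (partial_sum x ` {1..n}) \<le> card (partial_sum x ` last_visits)"
    using image_partial_sum_last_visits by (intro card_mono) (auto simp: last_visits_def)
  also have "\<dots> \<le> card last_visits"
    by (rule card_image_le) (simp add: last_visits_def)
  also have "\<dots> \<le> card ({k\<in>{1..n}. shift_seq k x \<in> no_return_within m} \<union> {n - m<..n})"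
  proof (rule card_mono)
    show "last_visits \<subseteq> {k\<in>{1..n}. shift_seq k x \<in> no_return_within m} \<union> {n - m<..n}"
    proof
      fix k assume k: "k \<in> last_visits"
      then have "k + m \<le> n \<Longrightarrow> shift_seq k x \<in> no_return_within m"
        unfolding last_visits_def no_return_within_def by (auto simp: partial_sum_shift_seq)
      then show "k \<in> {k\<in>{1..n}. shift_seq k x \<in> no_return_within m} \<union> {n - m<..n}"
        using k unfolding last_visits_def by (cases "k + m \<le> n") auto
    qed
  qed simp
  also have "\<dots> \<le> card {k\<in>{1..n}. shift_seq k x \<in> no_return_within m} + m"
    using card_Un_le[of "{k\<in>{1..n}. shift_seq k x \<in> no_return_within m}" "{n - m<..n}"] by simp
  finally show ?thesis .
qed

lemma range_ratio_bounds:
  shows "birkhoff_sum (indicator no_return) n x / real n - 1 / real n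
           \<le> real (card (partial_sum x ` {1..n})) / real n"
    and "real (card (partial_sum x ` {1..n})) / real n
           \<le> birkhoff_sum (indicator (no_return_within m)) n x / real n + (1 + real m) / real n"
proof -
  have "birkhoff_sum (indicator no_return) n x \<le> real (card (partial_sum x ` {1..n})) + 1"
    unfolding birkhoff_sum_indicator
    using card_filter_lessThan_le[of n "\<lambda>k. shift_seq k x \<in> no_return"] card_no_return_le_card_range[of n x]
    by linarith
  then show "birkhoff_sum (indicator no_return) n x / real n - 1 / real n
      \<le> real (card (partial_sum x ` {1..n})) / real n"
    by (simp add: diff_divide_distrib[symmetric] divide_right_mono)
  have "real (card (partial_sum x ` {1..n})) \<le> birkhoff_sum (indicator (no_return_within m)) n x + (1 + real m)"
    unfolding birkhoff_sum_indicator
    using card_filter_atLeastAtMost_le[of n "\<lambda>k. shift_seq k x \<in> no_return_within m"]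
      card_range_le_card_no_return_within[of x n m]
    by linarith
  then show "real (card (partial_sum x ` {1..n})) / real n
      \<le> birkhoff_sum (indicator (no_return_within m)) n x / real n + (1 + real m) / real n"
    by (simp add: add_divide_distrib[symmetric] divide_right_mono)
qed

lemma tendsto_of_approximations:
  fixes R a :: "nat \<Rightarrow> real" and b :: "nat \<Rightarrow> nat \<Rightarrow> real" and q :: "nat \<Rightarrow> real"
  assumes a: "a \<longlonglongrightarrow> c" and b: "\<And>m. b m \<longlonglongrightarrow> q m" and q: "q \<longlonglongrightarrow> c"
    and lower: "\<And>n. a n - 1 / real n \<le> R n"
    and upper: "\<And>m n. R n \<le> b m n + (1 + real m) / real n"
  shows "R \<longlonglongrightarrow> c"
proof (rule LIMSEQ_I)
  fix r :: real assume r: "0 < r"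
  obtain m where m: "q m < c + r / 3"
    using order_tendstoD(2)[OF q, of "c + r / 3"] r by (auto simp: eventually_sequentially)
  have "(\<lambda>n. (1 + real m) * (1 / real n)) \<longlonglongrightarrow> (1 + real m) * 0"
    by (intro tendsto_intros lim_inverse_n')
  then have "(\<lambda>n. (1 + real m) / real n) \<longlonglongrightarrow> 0" by simp
  from order_tendstoD(2)[OF this, of "r / 3"]
  have "eventually (\<lambda>n. (1 + real m) / real n < r / 3) sequentially" using r by simp
  moreover have "eventually (\<lambda>n. 1 / real n < r / 2) sequentially"
    using order_tendstoD(2)[OF lim_inverse_n', of "r / 2"] r by (simp add: inverse_eq_divide)
  moreover have "eventually (\<lambda>n. c - r / 2 < a n) sequentially"
    using order_tendstoD(1)[OF a, of "c - r / 2"] r by simp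
  moreover have "eventually (\<lambda>n. b m n < q m + r / 3) sequentially"
    using order_tendstoD(2)[OF b[of m], of "q m + r / 3"] r by simp
  ultimately have "eventually (\<lambda>n. norm (R n - c) < r) sequentially"
  proof eventually_elim
    case (elim n)
    have "c - r < R n" using elim lower[of n] by linarith
    moreover have "R n < c + r" using elim upper[of n m] m by linarith
    ultimately show ?case by (simp add: abs_less_iff)
  qed
  then show "\<exists>no. \<forall>n\<ge>no. norm (R n - c) < r" by (simp add: eventually_sequentially)
qed

theorem range_ratio_tendsto:
  fixes M :: "'a measure" and X S :: "nat \<Rightarrow> 'a \<Rightarrow> int"
  assumes iid: "iid_seq M X" and S: "\<And>n \<omega>. S n \<omega> = (\<Sum>i<n. X i \<omega>)"
  shows "AE \<omega> in M. (\<lambda>n. real (card ((\<lambda>k. S k \<omega>) ` {1..n})) / real n)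
           \<longlonglongrightarrow> measure M {\<omega>' \<in> space M. \<forall>k\<ge>1. S k \<omega>' \<noteq> 0}"
proof -
  interpret iid_seq M X by (rule iid)
  define P where "P = distr M seq_space (increments 0)"
  interpret P: ergodic_shift P unfolding P_def by (rule ergodic_shift_increments)
  have "P.prob no_return = prob (increments 0 -` no_return \<inter> space M)"
    unfolding P_def by (rule measure_distr[OF measurable_increments no_return_sets])
  also have "increments 0 -` no_return \<inter> space M = {\<omega>' \<in> space M. \<forall>k\<ge>1. S k \<omega>' \<noteq> 0}"
    unfolding no_return_def partial_sum_def S by auto
  finally have q: "P.prob no_return = prob {\<omega>' \<in> space M. \<forall>k\<ge>1. S k \<omega>' \<noteq> 0}" .
  have "(\<lambda>m. P.prob (no_return_within m)) \<longlonglongrightarrow> P.prob (\<Inter>m. no_return_within m)"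
    by (rule P.finite_Lim_measure_decseq) (use P.events_P decseq_no_return_within in auto)
  then have q_approx: "(\<lambda>m. P.prob (no_return_within m)) \<longlonglongrightarrow> P.prob no_return"
    unfolding INT_no_return_within .
  have "AE f in P. (\<lambda>n. birkhoff_sum (indicator no_return) n f / real n) \<longlonglongrightarrow> P.prob no_return
      \<and> (\<forall>m. (\<lambda>n. birkhoff_sum (indicator (no_return_within m)) n f / real n)
              \<longlonglongrightarrow> P.prob (no_return_within m))"
    using P.birkhoff_average_indicator_tendsto[OF no_return_sets]
      P.birkhoff_average_indicator_tendsto[OF no_return_within_sets]
    by (simp add: AE_all_countable)
  then have "AE \<omega> in M. (\<lambda>n. birkhoff_sum (indicator no_return) n (increments 0 \<omega>) / real n)
        \<longlonglongrightarrow> P.prob no_return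
      \<and> (\<forall>m. (\<lambda>n. birkhoff_sum (indicator (no_return_within m)) n (increments 0 \<omega>) / real n)
              \<longlonglongrightarrow> P.prob (no_return_within m))"
    unfolding P_def by (rule AE_distrD[OF measurable_increments])
  then show ?thesis unfolding q[symmetric]
  proof (rule AE_mp, intro AE_I2 impI, elim conjE)
    fix \<omega>
    assume lim_no_return: "(\<lambda>n. birkhoff_sum (indicator no_return) n (increments 0 \<omega>) / real n)
        \<longlonglongrightarrow> P.prob no_return"
      and lim_within: "\<forall>m. (\<lambda>n. birkhoff_sum (indicator (no_return_within m)) n (increments 0 \<omega>) / real n)
              \<longlonglongrightarrow> P.prob (no_return_within m)"
    have range: "(\<lambda>k. S k \<omega>) ` {1..n} = partial_sum (increments 0 \<omega>) ` {1..n}" for n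
      unfolding partial_sum_def S by simp
    show "(\<lambda>n. real (card ((\<lambda>k. S k \<omega>) ` {1..n})) / real n) \<longlonglongrightarrow> P.prob no_return"
      unfolding range
      by (rule tendsto_of_approximations[OF lim_no_return lim_within[rule_format] q_approx
            range_ratio_bounds])
  qed
qed

theorem theorem1:
  fixes M :: "'a measure" and N :: "'b measure"
    and X :: "nat \<Rightarrow> 'a \<Rightarrow> int"
    and S :: "nat \<Rightarrow> 'a \<Rightarrow> int"
    and \<xi> :: "int \<Rightarrow> 'b \<Rightarrow> real"
    and u :: "nat \<Rightarrow> real"
    and \<alpha> \<tau> C\<^sub>1 C\<^sub>2 :: real
    and \<mu> :: "real measure"
  assumes M: "prob_space M" and N: "prob_space N"
    and X_meas: "\<And>k. X k \<in> measurable M (count_space UNIV)"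
    and X_indep: "prob_space.indep_vars M (\<lambda>_. count_space UNIV) X UNIV"
    and X_ident: "\<And>k. distr M (count_space UNIV) (X k) = distr M (count_space UNIV) (X 0)"
    and S_def: "\<And>n \<omega>. S n \<omega> = (\<Sum>i<n. X i \<omega>)"
    and \<alpha>: "0 < \<alpha>" "\<alpha> < 1"
    and \<mu>_prob: "prob_space \<mu>" and \<mu>_sets: "sets \<mu> = sets borel"
    and C1_pos: "C\<^sub>1 > 0"
    and \<mu>_char: "\<And>\<theta>. char \<mu> \<theta> =
        exp (- (complex_of_real (\<bar>\<theta>\<bar> powr \<alpha>)) * (complex_of_real C\<^sub>1 + \<i> * complex_of_real (C\<^sub>2 * sgn \<theta>)))"
    and attraction: "\<And>x. (\<lambda>n. measure M {\<omega> \<in> space M. real_of_int (S n \<omega>) / real n powr (1 / \<alpha>) \<le> x})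
                          \<longlonglongrightarrow> cdf \<mu> x"
    and \<xi>_meas: "\<And>k. \<xi> k \<in> borel_measurable N"
    and stat: "stationary_seq N \<xi>"
    and \<tau>: "\<tau> \<ge> 0"
    and tail: "(\<lambda>n. real n * measure N {\<eta> \<in> space N. \<xi> 0 \<eta> > u n}) \<longlonglongrightarrow> \<tau>"
    and DD': "\<exists>a l. condD N \<xi> u a l \<and> condD' N \<xi> u a l"
  shows "AE \<omega> in M.
           (\<lambda>n. measure N {\<eta> \<in> space N. \<forall>k\<in>{1..n}. \<xi> (S k \<omega>) \<eta> \<le> u n})
             \<longlonglongrightarrow> exp (- \<tau> * measure M {\<omega>' \<in> space M. \<forall>k\<ge>1. S k \<omega>' \<noteq> 0})"
proof -
  interpret stationary_scenery N \<xi>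
    by (intro stationary_scenery.intro scenery.intro stationary_scenery_axioms.intro
        scenery_axioms.intro N \<xi>_meas stat)
  obtain a l where D: "condD N \<xi> u a l" and D': "condD' N \<xi> u a l" using DD' by blast
  have tail': "(\<lambda>n. real n * exceed_prob (u n)) \<longlonglongrightarrow> \<tau>"
    using tail unfolding exceed_prob_def exceed_def .
  have "iid_seq M X" by (intro iid_seq.intro iid_seq_axioms.intro M X_meas X_indep X_ident)
  from range_ratio_tendsto[OF this S_def] show ?thesis
  proof (rule AE_mp, intro AE_I2 impI)
    fix \<omega>
    assume range: "(\<lambda>n. real (card ((\<lambda>k. S k \<omega>) ` {1..n})) / real n)
       \<longlonglongrightarrow> measure M {\<omega>' \<in> space M. \<forall>k\<ge>1. S k \<omega>' \<noteq> 0}"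
    have "(\<lambda>n. F ((\<lambda>k. S k \<omega>) ` {1..n}) (u n))
        \<longlonglongrightarrow> exp (- \<tau> * measure M {\<omega>' \<in> space M. \<forall>k\<ge>1. S k \<omega>' \<noteq> 0})"
    proof (rule jointF_tendsto_exp[OF tail' D D' _ _ range])
      show "card ((\<lambda>k. S k \<omega>) ` {1..n}) \<le> n" for n
        using card_image_le[of "{1..n}" "\<lambda>k. S k \<omega>"] by simp
    qed simp
    then show "(\<lambda>n. measure N {\<eta> \<in> space N. \<forall>k\<in>{1..n}. \<xi> (S k \<omega>) \<eta> \<le> u n})
        \<longlonglongrightarrow> exp (- \<tau> * measure M {\<omega>' \<in> space M. \<forall>k\<ge>1. S k \<omega>' \<noteq> 0})"
      unfolding jointF_def by simp
  qed
qed

end
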